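(* Let $\Sigma$ be the discrete-time LTI system $x_{k+1}=Ax_k+Bu_k$, $y_k=Cx_k+Du_k$ with real matrices of dimensions $n_x\times n_x$, $n_x\times n_u$, $n_y\times n_x$, $n_y\times n_u$ and $(A,B)$ controllable. Let $Q,M\in\mathbb{N}_{\geqslant 1}$, $\bm{\omega}=(\omega_0,\dots,\omega_{M-1})$ with $\omega_m\in[0,\pi)$, and let $\{U^{d,i}(\omega),Y^{d,i}(\omega)\}$, $i\in\{1,\dots,Q\}$, be input-output spectra of $\Sigma$ with sampled sequences $\bm{U}^{d,i}$, $\bm{Y}^{d,i}$ at the frequencies $\bm{\omega}$. Let $L_0,L\in\mathbb{N}$ with $n_x\leqslant L_0\leqslant L$, and suppose $\bm{U}^{d,i}$, $i\in\{1,\dots,Q\}$, are CPE of order $L+n_x$. Let $\{\bm{u}^{\mathrm{ini}},\bm{y}^{\mathrm{ini}}\}$ be a real input-output trajectory of $\Sigma$ of length $L_0$. Suppose $\{\bm{u},\bm{y}\}$ is a real input-output trajectory of $\Sigma$ of length $L$ with $(u_k,y_k)=(u^{\mathrm{ini}}_k,y^{\mathrm{ini}}_k)$ for $k=0,\dots,L_0-1$. Then there exists $g\in\mathbb{R}^{2MQ}$ such that $$\begin{bmatrix}u^{\mathrm{ini}}_{[0,L_0-1]}\\ u_{[L_0,L-1]}\\ y^{\mathrm{ini}}_{[0,L_0-1]}\end{bmatrix}=\begin{bmatrix}\Gamma_L(\{\bm{U}^{d,i}\}_{i=1}^Q,\bm{\omega})\\ \Gamma_{L_0}(\{\bm{Y}^{d,i}\}_{i=1}^Q,\bm{\omega})\end{bmatrix}g,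 \qquad (\ast)$$ and moreover, for any $g\in\mathbb{R}^{2MQ}$ satisfying $(\ast)$, the output satisfies $y_{[0,L-1]}=\Gamma_L(\{\bm{Y}^{d,i}\}_{i=1}^Q,\bm{\omega})g$.
   Context: $j=\sqrt{-1}$; $^*$ denotes entrywise complex conjugation; $\otimes$ is the Kronecker product; $\mathbb{W}=[-\pi,\pi)$. For a sequence $\bm{x}$, $x_{[n,m]}=(x_n,\dots,x_m)$ is the vertical stack of its entries. Input-output trajectory: real sequences $\{\bm{u},\bm{y}\}$ of length $N$ form an input-output trajectory of $\Sigma$ if there is a real state sequence $\bm{x}$ of length $N$ with $x_{k+1}=Ax_k+Bu_k$ for $k=0,\dots,N-2$ and $y_k=Cx_k+Du_k$ for $k=0,\dots,N-1$. Spectra: a spectrum is a function $V:\mathbb{W}\to\mathbb{C}^{n}$ with $V(\omega)=V^*(-\omega)$ for all $\omega$. A pair $\{U(\omega),Y(\omega)\}$ of such spectra (values in $\mathbb{C}^{n_u},\mathbb{C}^{n_y}$) is an input-output spectrum of $\Sigma$ if there exists a spectrum $X(\omega)\in\mathbb{C}^{n_x}$ with $e^{j\omega}X(\omega)=AX(\omega)+BU(\omega)$ and $Y(\omega)=CX(\omega)+DU(\omega)$ for all $\omega\in\mathbb{W}$. Sampled sequences: $\bm{U}^{d,i}=(U^{d,i}(\omega_0),\dots,U^{d,i}(\omega_{M-1}))$ and likewise for $\bm{Y}^{d,i}$. $W_L(\omega)=\begin{bmatrix}1 & e^{j\omega} & \cdots & e^{j\omega(L-1)}\end{bmatrix}^\top$.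 For $\bm{V}=(V_0,\dots,V_{M-1})$, $V_m\in\mathbb{C}^{n_v}$: $F_L(\bm{V},\bm{\omega})=\begin{bmatrix}W_L(\omega_0)\otimes V_0 & \cdots & W_L(\omega_{M-1})\otimes V_{M-1}\end{bmatrix}\in\mathbb{C}^{n_vL\times M}$. For sequences $\bm{V}^1,\dots,\bm{V}^Q$, the real $n_vL\times 2MQ$ matrix $\Gamma_L(\{\bm{V}^{i}\}_{i=1}^Q,\bm{\omega})=\begin{bmatrix}\operatorname{Re}F_L(\bm{V}^{1},\bm{\omega}) & \cdots & \operatorname{Re}F_L(\bm{V}^{Q},\bm{\omega}) & \operatorname{Im}F_L(\bm{V}^{1},\bm{\omega}) & \cdots & \operatorname{Im}F_L(\bm{V}^{Q},\bm{\omega})\end{bmatrix}$. Frequency-domain CPE: sequences $\bm{V}^i\in(\mathbb{C}^{n_v})^M$, $i=1,\dots,Q$, of samples $V^i_m=V^i(\omega_m)$ of symmetric spectra at frequencies $\omega_m\in[0,\pi)$ are collectively persistently exciting of order $L$ if $\begin{bmatrix}F_L(\bm{V}^{1},\bm{\omega}) & \cdots & F_L(\bm{V}^{Q},\bm{\omega}) & F_L^*(\bm{V}^{1},\bm{\omega}) & \cdots & F_L^*(\bm{V}^{Q},\bm{\omega})\end{bmatrix}$ has full row rank $n_vL$. *)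

theory Defs
  imports Complex_Main "Jordan_Normal_Form.DL_Rank"
begin

abbreviation cmat :: "real mat \<Rightarrow> complex mat" where
  "cmat A \<equiv> map_mat complex_of_real A"

(* Controllability matrix [B, AB, ..., A^(nx-1) B] with nx = dim_row A. *)
definition ctrb_mat :: "real mat \<Rightarrow> real mat \<Rightarrow> real mat" where
  "ctrb_mat A B = mat (dim_row A) (dim_row A * dim_col B)
     (\<lambda>(i, j). (A ^\<^sub>m (j div dim_col B) * B) $$ (i, j mod dim_col B))"

definition controllable :: "real mat \<Rightarrow> real mat \<Rightarrow> bool" where
  "controllable A B \<longleftrightarrow> vec_space.rank (dim_row A) (ctrb_mat A B) = dim_row A"

definition io_trajectory ::
  "real mat \<Rightarrow> real mat \<Rightarrow> real mat \<Rightarrow> real mat \<Rightarrow> nat \<Rightarrow> (nat \<Rightarrow> real vec) \<Rightarrow> (nat \<Rightarrow> real vec) \<Rightarrow> bool" where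
  "io_trajectory A B C D N u y \<longleftrightarrow>
     (\<forall>k<N. u k \<in> carrier_vec (dim_col B) \<and> y k \<in> carrier_vec (dim_row C)) \<and>
     (\<exists>x :: nat \<Rightarrow> real vec. (\<forall>k<N. x k \<in> carrier_vec (dim_row A)) \<and>
        (\<forall>k. Suc k < N \<longrightarrow> x (Suc k) = A *\<^sub>v x k + B *\<^sub>v u k) \<and>
        (\<forall>k<N. y k = C *\<^sub>v x k + D *\<^sub>v u k))"

definition Wint :: "real set" where
  "Wint = {-pi..<pi}"

definition is_spectrum :: "nat \<Rightarrow> (real \<Rightarrow> complex vec) \<Rightarrow> bool" where
  "is_spectrum n V \<longleftrightarrow>
     (\<forall>w\<in>Wint. V w \<in> carrier_vec n) \<and>
     (\<forall>w\<in>Wint. -w \<in> Wint \<longrightarrow> V w = map_vec cnj (V (-w)))"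

definition io_spectrum ::
  "real mat \<Rightarrow> real mat \<Rightarrow> real mat \<Rightarrow> real mat \<Rightarrow> (real \<Rightarrow> complex vec) \<Rightarrow> (real \<Rightarrow> complex vec) \<Rightarrow> bool" where
  "io_spectrum A B C D U Y \<longleftrightarrow>
     is_spectrum (dim_col B) U \<and> is_spectrum (dim_row C) Y \<and>
     (\<exists>X. is_spectrum (dim_row A) X \<and>
        (\<forall>w\<in>Wint. exp (\<i> * of_real w) \<cdot>\<^sub>v X w = cmat A *\<^sub>v X w + cmat B *\<^sub>v U w \<and>
                   Y w = cmat C *\<^sub>v X w + cmat D *\<^sub>v U w))"

(* F_L(V, omega) for V = (V_0,...,V_{M-1}) with V_m in C^nv:
   column m is W_L(omega_m) \<otimes> V_m, i.e. entry (l*nv + s, m) = e^{j omega_m l} (V_m)_s. *)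
definition F_mat :: "nat \<Rightarrow> nat \<Rightarrow> nat \<Rightarrow> (nat \<Rightarrow> complex vec) \<Rightarrow> (nat \<Rightarrow> real) \<Rightarrow> complex mat" where
  "F_mat nv L M V w = mat (nv * L) M
     (\<lambda>(r, m). exp (\<i> * of_real (w m) * of_nat (r div nv)) * (V m $ (r mod nv)))"

(* Gamma_L({V^i}_{i=1}^Q, omega); the Q sequences are indexed by i < Q (V i is V^{i+1}),
   V i m is the m-th sample of the i-th sequence. *)
definition Gamma_mat :: "nat \<Rightarrow> nat \<Rightarrow> nat \<Rightarrow> nat \<Rightarrow> (nat \<Rightarrow> nat \<Rightarrow> complex vec) \<Rightarrow> (nat \<Rightarrow> real) \<Rightarrow> real mat" where
  "Gamma_mat nv L M Q V w = mat (nv * L) (2 * M * Q)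
     (\<lambda>(r, c). if c < M * Q then Re (F_mat nv L M (V (c div M)) w $$ (r, c mod M))
               else Im (F_mat nv L M (V ((c - M * Q) div M)) w $$ (r, (c - M * Q) mod M)))"

(* [F_L(V^1) ... F_L(V^Q) F_L^*(V^1) ... F_L^*(V^Q)]  (^* = entrywise conjugation) *)
definition CPE_mat :: "nat \<Rightarrow> nat \<Rightarrow> nat \<Rightarrow> nat \<Rightarrow> (nat \<Rightarrow> nat \<Rightarrow> complex vec) \<Rightarrow> (nat \<Rightarrow> real) \<Rightarrow> complex mat" where
  "CPE_mat nv L M Q V w = mat (nv * L) (2 * M * Q)
     (\<lambda>(r, c). if c < M * Q then F_mat nv L M (V (c div M)) w $$ (r, c mod M)
               else cnj (F_mat nv L M (V ((c - M * Q) div M)) w $$ (r, (c - M * Q) mod M)))"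

definition CPE :: "nat \<Rightarrow> nat \<Rightarrow> nat \<Rightarrow> nat \<Rightarrow> (nat \<Rightarrow> nat \<Rightarrow> complex vec) \<Rightarrow> (nat \<Rightarrow> real) \<Rightarrow> bool" where
  "CPE nv L M Q V w \<longleftrightarrow> vec_space.rank (nv * L) (CPE_mat nv L M Q V w) = nv * L"

(* x_{[a,b-1]} = vertical stack of x_a, ..., x_{b-1}, each in R^n *)
definition stack :: "nat \<Rightarrow> (nat \<Rightarrow> real vec) \<Rightarrow> nat \<Rightarrow> nat \<Rightarrow> real vec" where
  "stack n x a b = vec (n * (b - a)) (\<lambda>r. x (a + r div n) $ (r mod n))"

end

theory Submission
  imports Defs
begin

text \<open>Write \<open>g = (g\<^sub>1, g\<^sub>2)\<close> and \<open>h = g\<^sub>1 - \<i> g\<^sub>2\<close>. Block \<open>k\<close> of \<open>\<Gamma>\<^sub>L g\<close> is the real signal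
  \<open>Re (\<Sum>\<^sub>c h\<^sub>c e\<^sup>\<i>\<^sup>\<omega>\<^sup>k V\<^sub>c)\<close>, and since the spectra satisfy \<open>e\<^sup>\<i>\<^sup>\<omega> X = A X + B U\<close>,
  \<open>Y = C X + D U\<close>, the signals built from \<open>X, U, Y\<close> with common weights \<open>h\<close> form a real
  trajectory of the system.

  Existence: the linear map sending \<open>g\<close> to the initial state and the first \<open>L\<close> inputs of this
  trajectory is onto. A real left kernel vector \<open>(\<xi>, \<eta>)\<close> of it can be pushed through the
  state equation, which replaces \<open>\<xi>\<close> by \<open>A\<^sup>T \<xi>\<close>; combining these shifts along the first
  linear dependency of \<open>\<xi>, A\<^sup>T \<xi>, A\<^sup>T\<^sup>2 \<xi>, \<dots>\<close> eliminates the state, so persistency of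
  excitation of order \<open>L + n\<^sub>x\<close> makes the remaining input coefficients vanish. This forces
  \<open>\<eta> = 0\<close> and \<open>B\<^sup>T (A\<^sup>T)\<^sup>j \<xi> = 0\<close> for all \<open>j\<close>, hence \<open>\<xi> = 0\<close> by controllability. Matching
  the initial state and inputs of the given trajectory then matches its outputs.

  Uniqueness: a solution \<open>g\<close> reproduces \<open>u\<close> on \<open>[0, L)\<close> and \<open>y\<close> on \<open>[0, L\<^sub>0)\<close>. The state
  error then evolves freely under \<open>A\<close> and is invisible to \<open>C\<close> for \<open>L\<^sub>0 \<ge> n\<^sub>x\<close> steps, hence
  for all steps, so the synthesized output is \<open>y\<close>.\<close>

section \<open>Linear algebra\<close>

lemma full_rank_left_kernel:
  fixes K :: "'a::field mat"
  assumes K: "K \<in> carrier_mat n p" and rk: "vec_space.rank n K = n"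
    and \<gamma>: "\<gamma> \<in> carrier_vec n"
    and ann: "\<forall>j<p. (\<Sum>i<n. \<gamma> $ i * K $$ (i, j)) = 0"
  shows "\<gamma> = 0\<^sub>v n"
proof -
  interpret V: vec_space "TYPE('a)" n .
  have "V.lin_indpt {}"
    unfolding V.lin_dep_def by auto
  then obtain S where S: "finite S" "maximal S (\<lambda>T. T \<subseteq> set (cols K) \<and> V.lin_indpt T)"
    using maximal_exists_superset[of "set (cols K)" "\<lambda>T. T \<subseteq> set (cols K) \<and> V.lin_indpt T" "{}"]
    by auto
  have S_cols: "S \<subseteq> set (cols K)" and "V.lin_indpt S"
    using S(2) unfolding maximal_def by auto
  moreover have "card S = n" using V.rank_card_indpt[OF K S(2)] rk by simp
  moreover have S_carrier: "S \<subseteq> carrier_vec n" using S_cols K cols_dim by blast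
  ultimately have "V.basis S"
    using S(1) V.dim_is_n by (intro V.dim_li_is_basis) auto
  hence span: "V.span S = carrier_vec n" unfolding V.basis_def by auto
  show ?thesis
  proof (rule eq_vecI)
    fix r assume "r < dim_vec (0\<^sub>v n)"
    hence r: "r < n" by simp
    obtain a T where T: "unit_vec n r = V.lincomb a T" "finite T" "T \<subseteq> S"
      using span r V.in_spanE[of "unit_vec n r" S] by auto
    have T_carrier: "T \<subseteq> carrier_vec n" using T(3) S_carrier by auto
    have "\<gamma> $ r = (\<Sum>i<n. \<gamma> $ i * unit_vec n r $ i)"
      using r by (simp add: unit_vec_def if_distrib cong: if_cong)
    also have "\<dots> = (\<Sum>i<n. \<gamma> $ i * (\<Sum>v\<in>T. a v * v $ i))"
      by (rule sum.cong, simp, simp add: T(1) V.lincomb_index[OF _ T_carrier])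
    also have "\<dots> = (\<Sum>v\<in>T. a v * (\<Sum>i<n. \<gamma> $ i * v $ i))"
      by (simp add: sum_distrib_left sum_distrib_right mult_ac sum.swap[of _ T])
    also have "\<dots> = 0"
    proof (rule sum.neutral, rule ballI)
      fix v assume "v \<in> T"
      then obtain j where j: "j < p" "v = col K j" using T(3) S_cols K by (auto simp: cols_def)
      have "(\<Sum>i<n. \<gamma> $ i * v $ i) = (\<Sum>i<n. \<gamma> $ i * K $$ (i, j))"
        using j K by (intro sum.cong) auto
      thus "a v * (\<Sum>i<n. \<gamma> $ i * v $ i) = 0" using ann j by simp
    qed
    finally show "\<gamma> $ r = 0\<^sub>v n $ r" using r by simp
  qed (use \<gamma> in simp)
qed

text \<open>Applied to Krylov sequences this replaces the Cayley--Hamilton theorem.\<close>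

lemma exists_dependent_on_predecessors:
  fixes v :: "nat \<Rightarrow> 'a::field vec"
  shows "\<exists>d\<le>n. \<exists>a. \<forall>r<n. v d $ r = (\<Sum>s<d. a s * v s $ r)"
proof -
  define S where "S = mat\<^sub>r (Suc n) (Suc n)
     (\<lambda>i. if i = n then 0\<^sub>v (Suc n) else vec (Suc n) (\<lambda>s. v s $ i))"
  have S: "S \<in> carrier_mat (Suc n) (Suc n)" unfolding S_def by simp
  have "det S = 0" unfolding S_def
    by (rule det_row_0) auto
  then obtain \<alpha> where \<alpha>: "\<alpha> \<in> carrier_vec (Suc n)" "\<alpha> \<noteq> 0\<^sub>v (Suc n)" "S *\<^sub>v \<alpha> = 0\<^sub>v (Suc n)"
    using det_0_iff_vec_prod_zero_field[OF S] by auto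
  have rel: "(\<Sum>s<Suc n. v s $ r * \<alpha> $ s) = 0" if r: "r < n" for r
  proof -
    have "(S *\<^sub>v \<alpha>) $ r = (\<Sum>s<Suc n. v s $ r * \<alpha> $ s)"
      using r \<alpha>(1) unfolding S_def by (simp add: scalar_prod_def lessThan_atLeast0 row_def)
    thus ?thesis using \<alpha>(3) r by simp
  qed
  define D where "D = {s. s < Suc n \<and> \<alpha> $ s \<noteq> 0}"
  have "D \<noteq> {}"
  proof
    assume "D = {}"
    hence "\<alpha> = 0\<^sub>v (Suc n)" using \<alpha>(1) unfolding D_def by (intro eq_vecI) auto
    with \<alpha>(2) show False by simp
  qed
  moreover have D_fin: "finite D" unfolding D_def by simp
  ultimately have "Max D \<in> D" by simp
  define d where "d = Max D"
  have dn: "d \<le> n" and \<alpha>d: "\<alpha> $ d \<noteq> 0" using \<open>Max D \<in> D\<close> unfolding d_def D_def by auto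
  have above_d: "\<alpha> $ s = 0" if "d < s" "s < Suc n" for s
    using Max_ge[OF D_fin, of s] that unfolding d_def D_def by fastforce
  show ?thesis
  proof (intro exI conjI allI impI)
    fix r assume r: "r < n"
    have "(\<Sum>s<Suc n. v s $ r * \<alpha> $ s) = (\<Sum>s<Suc d. v s $ r * \<alpha> $ s)"
      using dn by (intro sum.mono_neutral_right) (auto simp: above_d)
    hence "v d $ r * \<alpha> $ d = - (\<Sum>s<d. v s $ r * \<alpha> $ s)"
      using rel[OF r] by (simp add: eq_neg_iff_add_eq_0 add.commute)
    hence "v d $ r = - (\<Sum>s<d. v s $ r * \<alpha> $ s) / \<alpha> $ d"
      using \<alpha>d by (simp add: field_simps)
    thus "v d $ r = (\<Sum>s<d. (- \<alpha> $ s / \<alpha> $ d) * v s $ r)"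
      by (simp add: sum_divide_distrib sum_negf mult.commute)
  qed (rule dn)
qed

lemma mult_mat_vec_lincomb:
  fixes T :: "'a::comm_ring_1 mat"
  assumes T: "T \<in> carrier_mat m n" and v: "\<forall>s\<in>S. v s \<in> carrier_vec n"
  shows "T *\<^sub>v vec n (\<lambda>r. \<Sum>s\<in>S. a s * v s $ r) = vec m (\<lambda>i. \<Sum>s\<in>S. a s * (T *\<^sub>v v s) $ i)"
proof (rule eq_vecI)
  fix i assume "i < dim_vec (vec m (\<lambda>i. \<Sum>s\<in>S. a s * (T *\<^sub>v v s) $ i))"
  hence i: "i < m" by simp
  have "(T *\<^sub>v vec n (\<lambda>r. \<Sum>s\<in>S. a s * v s $ r)) $ i = (\<Sum>j<n. T $$ (i, j) * (\<Sum>s\<in>S. a s * v s $ j))"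
    using T i by (simp add: scalar_prod_def row_def lessThan_atLeast0)
  also have "\<dots> = (\<Sum>s\<in>S. a s * (\<Sum>j<n. T $$ (i, j) * v s $ j))"
    by (simp add: sum_distrib_left mult_ac sum.swap[of _ S])
  also have "\<dots> = (\<Sum>s\<in>S. a s * (T *\<^sub>v v s) $ i)"
    using T i v by (intro sum.cong) (auto simp: scalar_prod_def row_def lessThan_atLeast0)
  finally show "(T *\<^sub>v vec n (\<lambda>r. \<Sum>s\<in>S. a s * v s $ r)) $ i = vec m (\<lambda>i. \<Sum>s\<in>S. a s * (T *\<^sub>v v s) $ i) $ i"
    using i by simp
qed (use T in simp)

lemma funpow_mult_mat_vec_carrier:
  assumes "T \<in> carrier_mat n n" and "v \<in> carrier_vec n"
  shows "((\<lambda>x. T *\<^sub>v x) ^^ k) v \<in> carrier_vec n"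
  by (induction k) (use assms in auto)

lemma funpow_mult_mat_vec_lincomb:
  fixes T :: "'a::comm_ring_1 mat"
  assumes T: "T \<in> carrier_mat n n" and v: "\<forall>s\<in>S. v s \<in> carrier_vec n"
  shows "((\<lambda>x. T *\<^sub>v x) ^^ k) (vec n (\<lambda>r. \<Sum>s\<in>S. a s * v s $ r))
       = vec n (\<lambda>r. \<Sum>s\<in>S. a s * ((\<lambda>x. T *\<^sub>v x) ^^ k) (v s) $ r)"
proof (induction k)
  case (Suc k)
  then show ?case
    using mult_mat_vec_lincomb[OF T, of S "\<lambda>s. ((\<lambda>x. T *\<^sub>v x) ^^ k) (v s)"]
      funpow_mult_mat_vec_carrier[OF T] v by simp
qed simp

lemma iterates_annihilated_if_dependent:
  fixes T :: "'a::field mat"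
  assumes T: "T \<in> carrier_mat n n" and E: "E \<in> carrier_mat p n" and v: "v \<in> carrier_vec n"
    and dep: "\<forall>r<n. ((\<lambda>x. T *\<^sub>v x) ^^ d) v $ r = (\<Sum>s<d. a s * ((\<lambda>x. T *\<^sub>v x) ^^ s) v $ r)"
    and low: "\<forall>s<d. E *\<^sub>v ((\<lambda>x. T *\<^sub>v x) ^^ s) v = 0\<^sub>v p"
  shows "E *\<^sub>v ((\<lambda>x. T *\<^sub>v x) ^^ j) v = 0\<^sub>v p"
proof (induction j rule: less_induct)
  case (less j)
  let ?it = "\<lambda>k. ((\<lambda>x. T *\<^sub>v x) ^^ k)"
  show ?case
  proof (cases "j < d")
    case True thus ?thesis using low by simp
  next
    case False
    have itd: "?it d v = vec n (\<lambda>r. \<Sum>s<d. a s * ?it s v $ r)"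
      using dep funpow_mult_mat_vec_carrier[OF T v] by (intro eq_vecI) auto
    have jd: "j = (j - d) + d" using False by simp
    have "?it j v = ?it (j - d) (?it d v)"
      by (metis jd funpow_add comp_apply)
    also have "\<dots> = vec n (\<lambda>r. \<Sum>s<d. a s * ?it (j - d) (?it s v) $ r)"
      unfolding itd by (rule funpow_mult_mat_vec_lincomb[OF T]) (use funpow_mult_mat_vec_carrier[OF T v] in auto)
    also have "\<dots> = vec n (\<lambda>r. \<Sum>s<d. a s * ?it (j - d + s) v $ r)"
      by (simp add: funpow_add)
    finally have "E *\<^sub>v ?it j v = vec p (\<lambda>i. \<Sum>s<d. a s * (E *\<^sub>v ?it (j - d + s) v) $ i)"
      using mult_mat_vec_lincomb[OF E, of "{..<d}" "\<lambda>s. ?it (j - d + s) v"]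
        funpow_mult_mat_vec_carrier[OF T v] by simp
    also have "\<dots> = 0\<^sub>v p"
    proof (rule eq_vecI)
      fix i assume "i < dim_vec (0\<^sub>v p)"
      hence i: "i < p" by simp
      have "\<forall>s<d. (E *\<^sub>v ?it (j - d + s) v) $ i = 0"
        using less[of "j - d + _"] False i by auto
      thus "vec p (\<lambda>i. \<Sum>s<d. a s * (E *\<^sub>v ?it (j - d + s) v) $ i) $ i = 0\<^sub>v p $ i"
        using i by simp
    qed simp
    finally show ?thesis .
  qed
qed

lemma iterates_annihilated_if_first_n:
  fixes T :: "'a::field mat"
  assumes T: "T \<in> carrier_mat n n" and E: "E \<in> carrier_mat p n" and v: "v \<in> carrier_vec n"
    and low: "\<forall>s<n. E *\<^sub>v ((\<lambda>x. T *\<^sub>v x) ^^ s) v = 0\<^sub>v p"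
  shows "E *\<^sub>v ((\<lambda>x. T *\<^sub>v x) ^^ j) v = 0\<^sub>v p"
proof -
  obtain d a where "d \<le> n"
    and dep: "\<forall>r<n. ((\<lambda>x. T *\<^sub>v x) ^^ d) v $ r = (\<Sum>s<d. a s * ((\<lambda>x. T *\<^sub>v x) ^^ s) v $ r)"
    using exists_dependent_on_predecessors[of n "\<lambda>s. ((\<lambda>x. T *\<^sub>v x) ^^ s) v"] by blast
  with low show ?thesis by (intro iterates_annihilated_if_dependent[OF T E v dep]) auto
qed

lemma real_scalar_prod_self_eq_0:
  fixes v :: "real vec"
  assumes v: "v \<in> carrier_vec n" and "v \<bullet> v = 0"
  shows "v = 0\<^sub>v n"
proof -
  have "(\<Sum>i\<in>{0..<n}. v $ i * v $ i) = 0" using assms by (simp add: scalar_prod_def)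
  hence "\<forall>i\<in>{0..<n}. v $ i * v $ i = 0"
    by (subst (asm) sum_nonneg_eq_0_iff) auto
  thus ?thesis using v by (intro eq_vecI) auto
qed

text \<open>The solution is \<open>G\<^sup>T (G G\<^sup>T)\<^sup>-\<^sup>1 b\<close>; the Gram matrix \<open>G G\<^sup>T\<close> is invertible
  because \<open>v \<bullet> G G\<^sup>T v = |G\<^sup>T v|\<^sup>2\<close>.\<close>

lemma real_mat_solvable_if_left_kernel_trivial:
  fixes G :: "real mat"
  assumes G: "G \<in> carrier_mat n p"
    and ker: "\<forall>\<gamma>\<in>carrier_vec n. transpose_mat G *\<^sub>v \<gamma> = 0\<^sub>v p \<longrightarrow> \<gamma> = 0\<^sub>v n"
    and b: "b \<in> carrier_vec n"
  shows "\<exists>g\<in>carrier_vec p. G *\<^sub>v g = b"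
proof -
  define H where "H = G * transpose_mat G"
  have H: "H \<in> carrier_mat n n" using G unfolding H_def by simp
  have "det H \<noteq> 0"
  proof
    assume "det H = 0"
    then obtain v where v: "v \<in> carrier_vec n" "v \<noteq> 0\<^sub>v n" "H *\<^sub>v v = 0\<^sub>v n"
      using det_0_iff_vec_prod_zero_field[OF H] by auto
    have Gv: "transpose_mat G *\<^sub>v v \<in> carrier_vec p" using G v by simp
    have "(transpose_mat G *\<^sub>v v) \<bullet> (transpose_mat G *\<^sub>v v) = v \<bullet> (G *\<^sub>v (transpose_mat G *\<^sub>v v))"
      by (rule transpose_vec_mult_scalar[OF G Gv v(1)])
    also have "G *\<^sub>v (transpose_mat G *\<^sub>v v) = H *\<^sub>v v"
      unfolding H_def using G v by simp
    finally have "transpose_mat G *\<^sub>v v = 0\<^sub>v p"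
      using real_scalar_prod_self_eq_0[OF Gv] v by simp
    with ker v show False by auto
  qed
  then obtain P where P: "P \<in> carrier_mat n n" "H * P = 1\<^sub>m n"
    using det_non_zero_imp_unit[OF H] unfolding Units_def ring_mat_def by auto
  have "G *\<^sub>v (transpose_mat G *\<^sub>v (P *\<^sub>v b)) = H *\<^sub>v (P *\<^sub>v b)"
    unfolding H_def using G P b by (intro assoc_mult_mat_vec[symmetric]) auto
  also have "\<dots> = (H * P) *\<^sub>v b" by (rule assoc_mult_mat_vec[symmetric]) (use H P b in auto)
  also have "\<dots> = b" using P b by simp
  finally show ?thesis using G P b by (intro bexI[of _ "transpose_mat G *\<^sub>v (P *\<^sub>v b)"]) auto
qed

lemma sum_lessThan_add:
  fixes f :: "nat \<Rightarrow> 'a::comm_monoid_add"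
  shows "(\<Sum>r<m + n. f r) = (\<Sum>r<m. f r) + (\<Sum>r<n. f (m + r))"
  by (induction n) (simp_all add: ac_simps)

lemma sum_nat_blocks:
  fixes f :: "nat \<Rightarrow> 'a::comm_monoid_add"
  shows "(\<Sum>r<n * N. f r) = (\<Sum>k<N. \<Sum>q<n. f (k * n + q))"
proof -
  have "(\<Sum>q<n. f (k * n + q)) = sum f {k * n..<k * n + n}" for k
    using sum.shift_bounds_nat_ivl[of f 0 "k * n" n] by (simp add: atLeast0LessThan add.commute)
  thus ?thesis using sum.nat_group[of f n N] by (simp add: mult.commute)
qed

lemma block_index:
  assumes "k < N" "q < (n::nat)"
  shows "k * n + q < n * N" "(k * n + q) div n = k" "(k * n + q) mod n = q"
proof -
  have "k * n + q < Suc k * n" using assms by simp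
  also have "\<dots> \<le> N * n" using assms by (intro mult_right_mono) auto
  finally show "k * n + q < n * N" by (simp add: mult.commute)
qed (use assms in simp_all)

lemma append_vec_assoc: "(a @\<^sub>v b) @\<^sub>v c = a @\<^sub>v (b @\<^sub>v c)"
proof (rule eq_vecI)
  fix i assume "i < dim_vec (a @\<^sub>v (b @\<^sub>v c))"
  hence i: "i < dim_vec a + dim_vec b + dim_vec c" by simp
  show "((a @\<^sub>v b) @\<^sub>v c) $ i = (a @\<^sub>v (b @\<^sub>v c)) $ i"
  proof (cases "i < dim_vec a + dim_vec b")
    case True
    have "i - dim_vec a < dim_vec b" if "\<not> i < dim_vec a" using True that by linarith
    thus ?thesis using True by auto
  next
    case False
    hence "\<not> i - dim_vec a < dim_vec b" by linarith
    thus ?thesis using i False by (simp add: diff_diff_left)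
  qed
qed simp

lemma add_vec_right_cancel:
  fixes a b c :: "'a::group_add vec"
  assumes "a \<in> carrier_vec n" "b \<in> carrier_vec n" "c \<in> carrier_vec n" "a + c = b + c"
  shows "a = b"
proof (rule eq_vecI)
  fix i assume "i < dim_vec b"
  hence "i < n" using assms by simp
  thus "a $ i = b $ i" using arg_cong[OF assms(4), of "\<lambda>v. v $ i"] assms(1-3) by simp
qed (use assms in simp)

lemma transpose_mult_vec_sum:
  fixes E :: "real mat" and v :: "complex vec"
  assumes E: "E \<in> carrier_mat m n" and \<xi>: "\<xi> \<in> carrier_vec m" and v: "v \<in> carrier_vec n"
  shows "(\<Sum>r<n. of_real ((transpose_mat E *\<^sub>v \<xi>) $ r) * v $ r) = (\<Sum>q<m. of_real (\<xi> $ q) * (cmat E *\<^sub>v v) $ q)"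
proof -
  have "(\<Sum>r<n. of_real ((transpose_mat E *\<^sub>v \<xi>) $ r) * v $ r)
      = (\<Sum>r<n. \<Sum>q<m. of_real (\<xi> $ q) * (of_real (E $$ (q, r)) * v $ r))"
    using E \<xi> by (intro sum.cong refl)
      (simp add: scalar_prod_def col_def lessThan_atLeast0 sum_distrib_left sum_distrib_right mult_ac)
  also have "\<dots> = (\<Sum>q<m. of_real (\<xi> $ q) * (cmat E *\<^sub>v v) $ q)"
    using E v by (subst sum.swap)
      (simp add: scalar_prod_def row_def lessThan_atLeast0 sum_distrib_left)
  finally show ?thesis .
qed

lemma funpow_transpose_scalar_prod:
  fixes T :: "'a::comm_ring_1 mat"
  assumes T: "T \<in> carrier_mat n n" and \<xi>: "\<xi> \<in> carrier_vec n" and v: "v \<in> carrier_vec n"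
  shows "((\<lambda>x. transpose_mat T *\<^sub>v x) ^^ j) \<xi> \<bullet> v = \<xi> \<bullet> (T ^\<^sub>m j *\<^sub>v v)"
  using v
proof (induction j arbitrary: v)
  case (Suc j)
  have "((\<lambda>x. transpose_mat T *\<^sub>v x) ^^ Suc j) \<xi> \<bullet> v = ((\<lambda>x. transpose_mat T *\<^sub>v x) ^^ j) \<xi> \<bullet> (T *\<^sub>v v)"
    using T Suc.prems funpow_mult_mat_vec_carrier[of "transpose_mat T" n \<xi> j] \<xi>
    by (simp add: transpose_vec_mult_scalar)
  also have "\<dots> = \<xi> \<bullet> (T ^\<^sub>m j *\<^sub>v (T *\<^sub>v v))"
    using T Suc by simp
  also have "\<dots> = \<xi> \<bullet> (T ^\<^sub>m Suc j *\<^sub>v v)"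
    using T Suc.prems by (simp add: assoc_mult_mat_vec[of "T ^\<^sub>m j" n n T n v])
  finally show ?case .
qed (use T \<xi> in simp)

section \<open>Controllability and observability\<close>

lemma controllable_left_kernel:
  assumes A: "A \<in> carrier_mat nx nx" and B: "B \<in> carrier_mat nx nu" and ctrb: "controllable A B"
    and \<xi>: "\<xi> \<in> carrier_vec nx"
    and ker: "\<forall>j. transpose_mat B *\<^sub>v ((\<lambda>x. transpose_mat A *\<^sub>v x) ^^ j) \<xi> = 0\<^sub>v nu"
  shows "\<xi> = 0\<^sub>v nx"
proof (rule full_rank_left_kernel)
  show "ctrb_mat A B \<in> carrier_mat nx (nx * nu)" "vec_space.rank nx (ctrb_mat A B) = nx"
    using A B ctrb unfolding ctrb_mat_def controllable_def by auto
  show "\<forall>jj<nx * nu. (\<Sum>i<nx. \<xi> $ i * ctrb_mat A B $$ (i, jj)) = 0"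
  proof (intro allI impI)
    fix jj assume jj: "jj < nx * nu"
    let ?j = "jj div nu" and ?l = "jj mod nu"
    have l: "?l < nu" using jj by (cases nu) auto
    let ?it = "((\<lambda>x. transpose_mat A *\<^sub>v x) ^^ ?j) \<xi>"
    have it: "?it \<in> carrier_vec nx" using funpow_mult_mat_vec_carrier[of "transpose_mat A"] A \<xi> by simp
    have "(\<Sum>i<nx. \<xi> $ i * ctrb_mat A B $$ (i, jj)) = \<xi> \<bullet> col (A ^\<^sub>m ?j * B) ?l"
      using A B jj l \<xi> by (simp add: ctrb_mat_def scalar_prod_def lessThan_atLeast0)
    also have "\<dots> = ?it \<bullet> col B ?l"
      using A B l \<xi> by (simp add: col_mult2[OF pow_carrier_mat[OF A] B l] funpow_transpose_scalar_prod)
    also have "\<dots> = (transpose_mat B *\<^sub>v ?it) $ ?l"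
      using B l it by (simp add: comm_scalar_prod[of _ nx])
    finally show "(\<Sum>i<nx. \<xi> $ i * ctrb_mat A B $$ (i, jj)) = 0" using ker l by simp
  qed
qed (rule \<xi>)

lemma outputs_agree_if_agree_initially:
  fixes A B C :: "real mat"
  assumes A: "A \<in> carrier_mat nx nx" and B: "B \<in> carrier_mat nx nu" and C: "C \<in> carrier_mat ny nx"
    and x: "\<forall>k<L. x k \<in> carrier_vec nx" and x': "\<forall>k<L. x' k \<in> carrier_vec nx"
    and u: "\<forall>k<L. u k \<in> carrier_vec nu"
    and dyn: "\<forall>k. Suc k < L \<longrightarrow> x (Suc k) = A *\<^sub>v x k + B *\<^sub>v u k"
    and dyn': "\<forall>k. Suc k < L \<longrightarrow> x' (Suc k) = A *\<^sub>v x' k + B *\<^sub>v u k"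
    and init: "\<forall>k<nx. C *\<^sub>v x k = C *\<^sub>v x' k" and nxL: "nx \<le> L"
    and k: "k < L"
  shows "C *\<^sub>v x k = C *\<^sub>v x' k"
proof -
  define e where "e k = x k - x' k" for k
  have step: "e (Suc k) = A *\<^sub>v e k" if "Suc k < L" for k
  proof -
    have "A *\<^sub>v e k = A *\<^sub>v x k - A *\<^sub>v x' k"
      unfolding e_def using A x x' that by (intro mult_minus_distrib_mat_vec) auto
    thus ?thesis using A B x x' u dyn dyn' that unfolding e_def by (intro eq_vecI) auto
  qed
  have e: "e k = ((\<lambda>v. A *\<^sub>v v) ^^ k) (e 0)" if "k < L" for k
    using that by (induction k) (simp_all add: step)
  have Ce: "C *\<^sub>v e k = C *\<^sub>v x k - C *\<^sub>v x' k" if "k < L" for k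
    unfolding e_def using C x x' that by (simp add: mult_minus_distrib_mat_vec)
  have "C *\<^sub>v ((\<lambda>v. A *\<^sub>v v) ^^ j) (e 0) = 0\<^sub>v ny" if "j < nx" for j
    using Ce[of j] e[of j] init C x that nxL by auto
  hence "C *\<^sub>v e k = 0\<^sub>v ny"
    using iterates_annihilated_if_first_n[OF A C, of "e 0"] e[OF k] x x' nxL k
    unfolding e_def by auto
  hence diff: "C *\<^sub>v x k - C *\<^sub>v x' k = 0\<^sub>v ny" using Ce[OF k] by simp
  show ?thesis
  proof (rule eq_vecI)
    fix i assume "i < dim_vec (C *\<^sub>v x' k)"
    hence "i < ny" using C by simp
    thus "(C *\<^sub>v x k) $ i = (C *\<^sub>v x' k) $ i"
      using arg_cong[OF diff, of "\<lambda>v. v $ i"] C by simp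
  qed (use C in simp)
qed

section \<open>Stacked sequences and the matrices \<open>\<Gamma>\<close>\<close>

lemma stack_carrier [simp]: "stack n x a b \<in> carrier_vec (n * (b - a))"
  unfolding stack_def by simp

lemma stack_cong:
  assumes "\<And>k. a \<le> k \<Longrightarrow> k < b \<Longrightarrow> x k = x' k"
  shows "stack n x a b = stack n x' a b"
proof -
  have "a + r div n < b" if "r < n * (b - a)" for r
    using that less_mult_imp_div_less[of r "b - a" n] by (simp add: mult.commute)
  thus ?thesis unfolding stack_def using assms by (intro eq_vecI) auto
qed

lemma stack_append:
  assumes "a \<le> b" "b \<le> c"
  shows "stack n x a b @\<^sub>v stack n x b c = stack n x a c"
proof (rule eq_vecI)
  have len: "n * (b - a) + n * (c - b) = n * (c - a)"
    using assms by (simp add: diff_mult_distrib2)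
  then show "dim_vec (stack n x a b @\<^sub>v stack n x b c) = dim_vec (stack n x a c)"
    by (simp add: stack_def)
  fix r assume "r < dim_vec (stack n x a c)"
  hence r: "r < n * (b - a) + n * (c - b)" using len by (simp add: stack_def)
  show "(stack n x a b @\<^sub>v stack n x b c) $ r = stack n x a c $ r"
  proof (cases "r < n * (b - a)")
    case False
    then obtain t where t: "r = n * (b - a) + t" by (metis le_add_diff_inverse not_less)
    have "0 < n" using r by (cases n) auto
    hence "b + t div n = a + r div n" "t mod n = r mod n"
      using assms unfolding t by simp_all
    thus ?thesis using r False t len by (simp add: stack_def)
  qed (use r len in \<open>simp add: stack_def\<close>)
qed

lemma stack_eq_stack_iff:
  assumes x: "\<forall>k<N. x k \<in> carrier_vec n" and x': "\<forall>k<N. x' k \<in> carrier_vec n"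
  shows "stack n x 0 N = stack n x' 0 N \<longleftrightarrow> (\<forall>k<N. x k = x' k)"
proof
  assume eq: "stack n x 0 N = stack n x' 0 N"
  show "\<forall>k<N. x k = x' k"
  proof (intro allI impI eq_vecI)
    fix k q assume k: "k < N" and "q < dim_vec (x' k)"
    hence q: "q < n" using x'[rule_format, OF k] by simp
    have "stack n x 0 N $ (k * n + q) = stack n x' 0 N $ (k * n + q)" using eq by simp
    thus "x k $ q = x' k $ q" using block_index[OF k q] by (simp add: stack_def)
  qed (use x x' carrier_vecD in metis)
qed (auto intro: stack_cong)

text \<open>Since \<open>Re a \<cdot> g\<^sub>1 + Im a \<cdot> g\<^sub>2 = Re (a (g\<^sub>1 - \<i> g\<^sub>2))\<close>, the real matrix
  \<open>[Re a, Im a]\<close> acts on \<open>(g\<^sub>1, g\<^sub>2)\<close> as \<open>a\<close> acts on the complex weights \<open>g\<^sub>1 - \<i> g\<^sub>2\<close>.\<close>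

definition re_im_mat :: "nat \<Rightarrow> nat \<Rightarrow> (nat \<Rightarrow> nat \<Rightarrow> complex) \<Rightarrow> real mat" where
  "re_im_mat P n a = mat n (2 * P) (\<lambda>(r, c). if c < P then Re (a r c) else Im (a r (c - P)))"

definition complex_weights :: "nat \<Rightarrow> real vec \<Rightarrow> nat \<Rightarrow> complex" where
  "complex_weights P g c = complex_of_real (g $ c) - \<i> * complex_of_real (g $ (c + P))"

lemma re_im_mat_carrier [simp]: "re_im_mat P n a \<in> carrier_mat n (2 * P)"
  unfolding re_im_mat_def by simp

lemma re_im_mat_dim [simp]: "dim_row (re_im_mat P n a) = n" "dim_col (re_im_mat P n a) = 2 * P"
  unfolding re_im_mat_def by simp_all

lemma re_im_mat_mult_vec:
  assumes g: "g \<in> carrier_vec (2 * P)" and r: "r < n"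
  shows "(re_im_mat P n a *\<^sub>v g) $ r = Re (\<Sum>c<P. complex_weights P g c * a r c)"
proof -
  let ?f = "\<lambda>c. (if c < P then Re (a r c) else Im (a r (c - P))) * g $ c"
  have "(re_im_mat P n a *\<^sub>v g) $ r = sum ?f {0..<P + P}"
    using g r unfolding re_im_mat_def by (simp add: scalar_prod_def row_def mult_2)
  also have "\<dots> = sum ?f {0..<P} + sum (\<lambda>c. ?f (c + P)) {0..<P}"
    using sum.atLeastLessThan_concat[of 0 P "P + P" ?f] sum.shift_bounds_nat_ivl[of ?f 0 P P]
    by simp
  also have "\<dots> = (\<Sum>c<P. Re (a r c) * g $ c + Im (a r c) * g $ (c + P))"
    by (simp add: sum.distrib atLeast0LessThan)
  also have "\<dots> = Re (\<Sum>c<P. complex_weights P g c * a r c)"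
    by (simp add: Re_sum complex_weights_def algebra_simps)
  finally show ?thesis .
qed

lemma re_im_mat_left_kernel:
  assumes \<gamma>: "\<gamma> \<in> carrier_vec n" and ker: "transpose_mat (re_im_mat P n a) *\<^sub>v \<gamma> = 0\<^sub>v (2 * P)"
    and c: "c < P"
  shows "(\<Sum>r<n. complex_of_real (\<gamma> $ r) * a r c) = 0"
proof -
  have col: "(\<Sum>r<n. re_im_mat P n a $$ (r, j) * \<gamma> $ r) = 0" if j: "j < 2 * P" for j
  proof -
    have "(transpose_mat (re_im_mat P n a) *\<^sub>v \<gamma>) $ j = (\<Sum>r<n. re_im_mat P n a $$ (r, j) * \<gamma> $ r)"
      using j \<gamma> by (simp add: scalar_prod_def lessThan_atLeast0 col_def)
    thus ?thesis using ker j by simp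
  qed
  have "(\<Sum>r<n. Re (a r c) * \<gamma> $ r) = 0"
    using col[of c] c by (simp add: re_im_mat_def)
  moreover have "(\<Sum>r<n. Im (a r c) * \<gamma> $ r) = 0"
    using col[of "c + P"] c by (simp add: re_im_mat_def)
  ultimately show ?thesis by (simp add: complex_eq_iff Re_sum Im_sum mult.commute)
qed

definition sinusoid_sum ::
  "nat \<Rightarrow> nat \<Rightarrow> (nat \<Rightarrow> real) \<Rightarrow> (nat \<Rightarrow> complex vec) \<Rightarrow> (nat \<Rightarrow> complex) \<Rightarrow> nat \<Rightarrow> real vec" where
  "sinusoid_sum n P \<omega> V h k =
     vec n (\<lambda>r. Re (\<Sum>c<P. h c * exp (\<i> * of_real (\<omega> c) * of_nat k) * V c $ r))"

lemma sinusoid_sum_carrier [simp]: "sinusoid_sum n P \<omega> V h k \<in> carrier_vec n"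
  unfolding sinusoid_sum_def by simp

lemma sinusoid_sum_dim [simp]: "dim_vec (sinusoid_sum n P \<omega> V h k) = n"
  unfolding sinusoid_sum_def by simp

lemma sinusoid_sum_cong:
  assumes "\<And>c. c < P \<Longrightarrow> V c = W c"
  shows "sinusoid_sum n P \<omega> V h k = sinusoid_sum n P \<omega> W h k"
  unfolding sinusoid_sum_def using assms by (intro eq_vecI) auto

lemma sinusoid_sum_Suc:
  assumes "\<forall>c<P. V c \<in> carrier_vec n"
  shows "sinusoid_sum n P \<omega> V h (Suc k) = sinusoid_sum n P \<omega> (\<lambda>c. exp (\<i> * of_real (\<omega> c)) \<cdot>\<^sub>v V c) h k"
proof (rule eq_vecI)
  fix r assume "r < dim_vec (sinusoid_sum n P \<omega> (\<lambda>c. exp (\<i> * of_real (\<omega> c)) \<cdot>\<^sub>v V c) h k)"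
  hence r: "r < n" by simp
  have "exp (\<i> * of_real (\<omega> c) * of_nat (Suc k)) = exp (\<i> * of_real (\<omega> c)) * exp (\<i> * of_real (\<omega> c) * of_nat k)"
    for c by (simp add: exp_add[symmetric] algebra_simps)
  hence term_eq: "h c * exp (\<i> * of_real (\<omega> c) * of_nat (Suc k)) * V c $ r
      = h c * exp (\<i> * of_real (\<omega> c) * of_nat k) * (exp (\<i> * of_real (\<omega> c)) \<cdot>\<^sub>v V c) $ r"
    if "c < P" for c using assms[rule_format, OF that] r by (simp only:) (simp add: mult_ac)
  show "sinusoid_sum n P \<omega> V h (Suc k) $ r = sinusoid_sum n P \<omega> (\<lambda>c. exp (\<i> * of_real (\<omega> c)) \<cdot>\<^sub>v V c) h k $ r"
    unfolding sinusoid_sum_def index_vec[OF r]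
    by (rule arg_cong[where f = Re], rule sum.cong[OF refl]) (simp only: lessThan_iff term_eq)
qed simp

lemma sinusoid_sum_add:
  assumes "\<forall>c<P. V c \<in> carrier_vec n" "\<forall>c<P. W c \<in> carrier_vec n"
  shows "sinusoid_sum n P \<omega> (\<lambda>c. V c + W c) h k = sinusoid_sum n P \<omega> V h k + sinusoid_sum n P \<omega> W h k"
proof (rule eq_vecI)
  fix r assume "r < dim_vec (sinusoid_sum n P \<omega> V h k + sinusoid_sum n P \<omega> W h k)"
  hence r: "r < n" by simp
  let ?z = "\<lambda>c. h c * exp (\<i> * of_real (\<omega> c) * of_nat k)"
  have "(\<Sum>c<P. ?z c * (V c + W c) $ r) = (\<Sum>c<P. ?z c * V c $ r + ?z c * W c $ r)"
  proof (rule sum.cong[OF refl])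
    fix c assume "c \<in> {..<P}"
    hence "V c \<in> carrier_vec n" "W c \<in> carrier_vec n" using assms by auto
    thus "?z c * (V c + W c) $ r = ?z c * V c $ r + ?z c * W c $ r"
      using r by (simp add: distrib_left)
  qed
  hence "(\<Sum>c<P. ?z c * (V c + W c) $ r) = (\<Sum>c<P. ?z c * V c $ r) + (\<Sum>c<P. ?z c * W c $ r)"
    by (simp only: sum.distrib)
  thus "sinusoid_sum n P \<omega> (\<lambda>c. V c + W c) h k $ r = (sinusoid_sum n P \<omega> V h k + sinusoid_sum n P \<omega> W h k) $ r"
    using r unfolding sinusoid_sum_def by (simp only: index_add_vec(1) dim_vec index_vec plus_complex.sel)
qed simp

lemma sinusoid_sum_cmat_mult:
  assumes E: "E \<in> carrier_mat m n" and V: "\<forall>c<P. V c \<in> carrier_vec n"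
  shows "sinusoid_sum m P \<omega> (\<lambda>c. cmat E *\<^sub>v V c) h k = E *\<^sub>v sinusoid_sum n P \<omega> V h k"
proof (rule eq_vecI)
  fix r assume "r < dim_vec (E *\<^sub>v sinusoid_sum n P \<omega> V h k)"
  hence r: "r < m" using E by simp
  let ?z = "\<lambda>c. h c * exp (\<i> * of_real (\<omega> c) * of_nat k)"
  have swap: "(\<Sum>q<n. of_real (E $$ (r, q)) * (\<Sum>c<P. ?z c * V c $ q))
      = (\<Sum>c<P. ?z c * (\<Sum>q<n. of_real (E $$ (r, q)) * V c $ q))"
    by (simp add: sum_distrib_left sum.swap[of _ "{..<n}"] mult_ac)
  have entry: "(cmat E *\<^sub>v V c) $ r = (\<Sum>q<n. of_real (E $$ (r, q)) * V c $ q)" if "c < P" for c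
    using E V r that by (auto simp: scalar_prod_def lessThan_atLeast0)
  have "(E *\<^sub>v sinusoid_sum n P \<omega> V h k) $ r = (\<Sum>q<n. E $$ (r, q) * Re (\<Sum>c<P. ?z c * V c $ q))"
    using E r by (simp add: sinusoid_sum_def scalar_prod_def lessThan_atLeast0)
  also have "\<dots> = Re (\<Sum>q<n. of_real (E $$ (r, q)) * (\<Sum>c<P. ?z c * V c $ q))"
    by (simp add: Re_sum)
  also have "\<dots> = Re (\<Sum>c<P. ?z c * (cmat E *\<^sub>v V c) $ r)"
    unfolding swap by (intro arg_cong[where f = Re] sum.cong refl) (simp add: entry)
  also have "\<dots> = sinusoid_sum m P \<omega> (\<lambda>c. cmat E *\<^sub>v V c) h k $ r"
    using r by (simp only: sinusoid_sum_def index_vec)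
  finally show "sinusoid_sum m P \<omega> (\<lambda>c. cmat E *\<^sub>v V c) h k $ r = (E *\<^sub>v sinusoid_sum n P \<omega> V h k) $ r" ..
qed (use E in simp)

lemma Gamma_mat_carrier: "Gamma_mat nv N M Q V w \<in> carrier_mat (nv * N) (2 * M * Q)"
  unfolding Gamma_mat_def by simp

lemma Gamma_mat_eq_re_im_mat:
  assumes "M \<ge> 1"
  shows "Gamma_mat nv N M Q V w = re_im_mat (M * Q) (nv * N)
    (\<lambda>r c. exp (\<i> * of_real (w (c mod M)) * of_nat (r div nv)) * V (c div M) (c mod M) $ (r mod nv))"
proof (rule eq_matI)
  fix r c assume "r < dim_row (re_im_mat (M * Q) (nv * N) (\<lambda>r c. exp (\<i> * of_real (w (c mod M)) * of_nat (r div nv)) * V (c div M) (c mod M) $ (r mod nv)))"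
    "c < dim_col (re_im_mat (M * Q) (nv * N) (\<lambda>r c. exp (\<i> * of_real (w (c mod M)) * of_nat (r div nv)) * V (c div M) (c mod M) $ (r mod nv)))"
  hence r: "r < nv * N" and c: "c < 2 * M * Q" by (simp_all add: re_im_mat_def)
  have F: "F_mat nv N M V' w $$ (r, m) = exp (\<i> * of_real (w m) * of_nat (r div nv)) * V' m $ (r mod nv)"
    if "m < M" for V' m
    using r that unfolding F_mat_def by simp
  have "c mod M < M" "(c - M * Q) mod M < M" using assms by auto
  then show "Gamma_mat nv N M Q V w $$ (r, c) = re_im_mat (M * Q) (nv * N)
    (\<lambda>r c. exp (\<i> * of_real (w (c mod M)) * of_nat (r div nv)) * V (c div M) (c mod M) $ (r mod nv)) $$ (r, c)"
    using r c unfolding Gamma_mat_def re_im_mat_def by (simp add: F mult.assoc)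
qed (simp_all add: Gamma_mat_def re_im_mat_def)

lemma Gamma_mat_mult_vec:
  assumes M: "M \<ge> 1" and g: "g \<in> carrier_vec (2 * M * Q)"
  shows "Gamma_mat nv N M Q V w *\<^sub>v g = stack nv
    (sinusoid_sum nv (M * Q) (\<lambda>c. w (c mod M)) (\<lambda>c. V (c div M) (c mod M)) (complex_weights (M * Q) g)) 0 N"
proof (rule eq_vecI)
  fix r assume "r < dim_vec (stack nv
    (sinusoid_sum nv (M * Q) (\<lambda>c. w (c mod M)) (\<lambda>c. V (c div M) (c mod M)) (complex_weights (M * Q) g)) 0 N)"
  hence r: "r < nv * N" by (simp add: stack_def)
  hence "r mod nv < nv" by (cases nv) auto
  moreover have "g \<in> carrier_vec (2 * (M * Q))" using g by (simp add: mult.assoc)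
  ultimately show "(Gamma_mat nv N M Q V w *\<^sub>v g) $ r = stack nv
    (sinusoid_sum nv (M * Q) (\<lambda>c. w (c mod M)) (\<lambda>c. V (c div M) (c mod M)) (complex_weights (M * Q) g)) 0 N $ r"
    using r unfolding Gamma_mat_eq_re_im_mat[OF M]
    by (simp only: re_im_mat_mult_vec) (simp add: stack_def sinusoid_sum_def mult.assoc)
qed (simp add: Gamma_mat_def stack_def)

lemma Gamma_equation_iff:
  assumes M: "M \<ge> 1" and g: "g \<in> carrier_vec (2 * M * Q)" and "L0 \<le> L"
    and agree: "\<forall>k<L0. u k = uini k \<and> y k = yini k"
    and u: "\<forall>k<L. u k \<in> carrier_vec nu" and y: "\<forall>k<L. y k \<in> carrier_vec ny"
  shows "stack nu uini 0 L0 @\<^sub>v stack nu u L0 L @\<^sub>v stack ny yini 0 L0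
      = (Gamma_mat nu L M Q U w @\<^sub>r Gamma_mat ny L0 M Q Y w) *\<^sub>v g
    \<longleftrightarrow> (\<forall>k<L. sinusoid_sum nu (M * Q) (\<lambda>c. w (c mod M)) (\<lambda>c. U (c div M) (c mod M))
            (complex_weights (M * Q) g) k = u k)
      \<and> (\<forall>k<L0. sinusoid_sum ny (M * Q) (\<lambda>c. w (c mod M)) (\<lambda>c. Y (c div M) (c mod M))
            (complex_weights (M * Q) g) k = y k)"
proof -
  have "stack nu uini 0 L0 @\<^sub>v stack nu u L0 L @\<^sub>v stack ny yini 0 L0 = stack nu u 0 L @\<^sub>v stack ny y 0 L0"
    using agree \<open>L0 \<le> L\<close> stack_append[of 0 L0 L nu u] stack_cong[of 0 L0 uini u] stack_cong[of 0 L0 yini y]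
    by (simp add: append_vec_assoc[symmetric])
  moreover have "(Gamma_mat nu L M Q U w @\<^sub>r Gamma_mat ny L0 M Q Y w) *\<^sub>v g
      = Gamma_mat nu L M Q U w *\<^sub>v g @\<^sub>v Gamma_mat ny L0 M Q Y w *\<^sub>v g"
    by (rule mat_mult_append[OF Gamma_mat_carrier Gamma_mat_carrier g])
  ultimately show ?thesis
    using u y \<open>L0 \<le> L\<close> unfolding Gamma_mat_mult_vec[OF M g]
    by (simp add: append_vec_eq[OF stack_carrier stack_carrier] eq_commute[of "stack nu u 0 L"]
        eq_commute[of "stack ny y 0 L0"] stack_eq_stack_iff)
qed

section \<open>Persistency of excitation\<close>

text \<open>The sequence \<open>c (s - 1), \<dots>, c 0, \<eta> 0, \<eta> 1, \<dots>\<close>; these are the input coefficients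
  of an annihilator after \<open>s\<close> applications of the state equation.\<close>

definition shifted_seq :: "(nat \<Rightarrow> 'a) \<Rightarrow> (nat \<Rightarrow> 'a) \<Rightarrow> nat \<Rightarrow> nat \<Rightarrow> 'a" where
  "shifted_seq c \<eta> s k = (if k < s then c (s - 1 - k) else \<eta> (k - s))"

lemma shifted_seq_Suc:
  "shifted_seq c \<eta> (Suc s) = (\<lambda>k. if k = 0 then c s else shifted_seq c \<eta> s (k - 1))"
proof
  fix k show "shifted_seq c \<eta> (Suc s) k = (if k = 0 then c s else shifted_seq c \<eta> s (k - 1))"
    by (cases k) (simp_all add: shifted_seq_def)
qed

lemma shifted_seq_index: "shifted_seq (\<lambda>j. c j $ q) (\<lambda>k. \<eta> k $ q) s k = shifted_seq c \<eta> s k $ q"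
  by (simp add: shifted_seq_def)

lemma shifted_seq_recurrence_imp_zero:
  fixes c \<eta> :: "nat \<Rightarrow> 'a::comm_ring_1"
  assumes rec: "\<forall>k<L + d. shifted_seq c \<eta> d k = (\<Sum>s<d. a s * shifted_seq c \<eta> s k)"
    and tail: "\<forall>k\<ge>L. \<eta> k = 0"
  shows "\<forall>k. \<eta> k = 0" and "\<forall>j<d. c j = 0"
proof -
  show \<eta>: "\<forall>k. \<eta> k = 0"
  proof
    fix j show "\<eta> j = 0"
    proof (induction "L - j" arbitrary: j rule: less_induct)
      case less
      show ?case
      proof (cases "L \<le> j")
        case False
        have "shifted_seq c \<eta> s (d + j) = 0" if "s < d" for s
          using that False less[of "d + j - s"] by (simp add: shifted_seq_def)
        moreover have "\<eta> j = (\<Sum>s<d. a s * shifted_seq c \<eta> s (d + j))"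
          using rec[rule_format, of "d + j"] False by (simp add: shifted_seq_def)
        ultimately show ?thesis by simp
      qed (use tail in simp)
    qed
  qed
  show "\<forall>j<d. c j = 0"
  proof (intro allI impI)
    fix j assume "j < d"
    thus "c j = 0"
    proof (induction j rule: less_induct)
      case (less j)
      have "shifted_seq c \<eta> s (d - 1 - j) = 0" if "s < d" for s
        using that less \<eta> by (simp add: shifted_seq_def)
      moreover have "c j = (\<Sum>s<d. a s * shifted_seq c \<eta> s (d - 1 - j))"
        using rec[rule_format, of "d - 1 - j"] less.prems by (simp add: shifted_seq_def)
      ultimately show ?case by simp
    qed
  qed
qed

text \<open>Collective persistency of excitation of order \<open>N\<close>, stated for a flat list of samples
  \<open>V c\<close> at frequencies \<open>\<omega> c\<close> and for real left kernel vectors only.\<close>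

definition persistently_exciting ::
  "nat \<Rightarrow> nat \<Rightarrow> nat \<Rightarrow> (nat \<Rightarrow> real) \<Rightarrow> (nat \<Rightarrow> complex vec) \<Rightarrow> bool" where
  "persistently_exciting n N P \<omega> V \<longleftrightarrow>
     (\<forall>\<beta> :: nat \<Rightarrow> real vec.
        (\<forall>c<P. (\<Sum>k<N. \<Sum>q<n. of_real (\<beta> k $ q) * (exp (\<i> * of_real (\<omega> c) * of_nat k) * V c $ q)) = 0)
        \<longrightarrow> (\<forall>k<N. \<forall>q<n. \<beta> k $ q = 0))"

text \<open>A real vector annihilating the columns of \<open>F\<close> also annihilates those of \<open>F\<^sup>*\<close>,
  so it lies in the left kernel of the full-rank CPE matrix.\<close>

lemma CPE_mat_index:
  assumes "M \<ge> 1" and "r < nv * N" and "c < M * Q"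
  shows "CPE_mat nv N M Q V w $$ (r, c)
      = exp (\<i> * of_real (w (c mod M)) * of_nat (r div nv)) * V (c div M) (c mod M) $ (r mod nv)"
    and "CPE_mat nv N M Q V w $$ (r, c + M * Q)
      = cnj (exp (\<i> * of_real (w (c mod M)) * of_nat (r div nv)) * V (c div M) (c mod M) $ (r mod nv))"
proof -
  have "c div M < Q" "c mod M < M" using assms by (auto simp: less_mult_imp_div_less mult.commute)
  thus "CPE_mat nv N M Q V w $$ (r, c)
      = exp (\<i> * of_real (w (c mod M)) * of_nat (r div nv)) * V (c div M) (c mod M) $ (r mod nv)"
    and "CPE_mat nv N M Q V w $$ (r, c + M * Q)
      = cnj (exp (\<i> * of_real (w (c mod M)) * of_nat (r div nv)) * V (c div M) (c mod M) $ (r mod nv))"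
    using assms by (simp_all add: CPE_mat_def F_mat_def)
qed

lemma CPE_real_left_kernel:
  fixes \<beta> :: "real vec"
  assumes M: "M \<ge> 1" and cpe: "CPE nv N M Q V w" and \<beta>: "\<beta> \<in> carrier_vec (nv * N)"
    and ker: "\<forall>c<M * Q. (\<Sum>r<nv * N. of_real (\<beta> $ r) *
      (exp (\<i> * of_real (w (c mod M)) * of_nat (r div nv)) * V (c div M) (c mod M) $ (r mod nv))) = 0"
  shows "\<beta> = 0\<^sub>v (nv * N)"
proof -
  let ?\<gamma> = "map_vec complex_of_real \<beta>" and ?K = "CPE_mat nv N M Q V w"
  have "?\<gamma> = 0\<^sub>v (nv * N)"
  proof (rule full_rank_left_kernel)
    show "?K \<in> carrier_mat (nv * N) (2 * M * Q)"
      unfolding CPE_mat_def by simp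
    show "vec_space.rank (nv * N) ?K = nv * N"
      using cpe unfolding CPE_def .
    have col: "(\<Sum>r<nv * N. ?\<gamma> $ r * ?K $$ (r, c)) = 0"
      and conj_col: "(\<Sum>r<nv * N. ?\<gamma> $ r * ?K $$ (r, c + M * Q)) = 0" if c: "c < M * Q" for c
    proof -
      show "(\<Sum>r<nv * N. ?\<gamma> $ r * ?K $$ (r, c)) = 0"
        using ker c \<beta> by (simp add: CPE_mat_index[OF M _ c])
      hence "cnj (\<Sum>r<nv * N. ?\<gamma> $ r * ?K $$ (r, c)) = 0" by simp
      thus "(\<Sum>r<nv * N. ?\<gamma> $ r * ?K $$ (r, c + M * Q)) = 0"
        using \<beta> by (simp add: cnj_sum CPE_mat_index[OF M _ c])
    qed
    show "\<forall>j<2 * M * Q. (\<Sum>r<nv * N. ?\<gamma> $ r * ?K $$ (r, j)) = 0"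
    proof (intro allI impI)
      fix j assume "j < 2 * M * Q"
      then consider "j < M * Q" | "j - M * Q < M * Q" "j = j - M * Q + M * Q" by fastforce
      thus "(\<Sum>r<nv * N. ?\<gamma> $ r * ?K $$ (r, j)) = 0"
        by cases (use col conj_col in metis)+
    qed
  qed (use \<beta> in simp)
  thus ?thesis by simp
qed

lemma CPE_imp_persistently_exciting:
  assumes M: "M \<ge> 1" and cpe: "CPE nv N M Q V w"
  shows "persistently_exciting nv N (M * Q) (\<lambda>c. w (c mod M)) (\<lambda>c. V (c div M) (c mod M))"
  unfolding persistently_exciting_def
proof (intro allI impI)
  fix \<beta> :: "nat \<Rightarrow> real vec" and k q
  assume ker: "\<forall>c<M * Q. (\<Sum>k<N. \<Sum>q<nv. of_real (\<beta> k $ q) *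
      (exp (\<i> * of_real (w (c mod M)) * of_nat k) * V (c div M) (c mod M) $ q)) = 0"
    and k: "k < N" and q: "q < nv"
  have "stack nv \<beta> 0 N = 0\<^sub>v (nv * N)"
  proof (rule CPE_real_left_kernel[OF M cpe])
    show "stack nv \<beta> 0 N \<in> carrier_vec (nv * N)" using stack_carrier[of nv \<beta> 0 N] by simp
    show "\<forall>c<M * Q. (\<Sum>r<nv * N. of_real (stack nv \<beta> 0 N $ r) *
      (exp (\<i> * of_real (w (c mod M)) * of_nat (r div nv)) * V (c div M) (c mod M) $ (r mod nv))) = 0"
      using ker by (simp add: sum_nat_blocks stack_def block_index)
  qed
  hence "stack nv \<beta> 0 N $ (k * nv + q) = 0" using block_index[OF k q] by simp
  thus "\<beta> k $ q = 0" using block_index[OF k q] by (simp add: stack_def)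
qed

section \<open>Sampled spectra as a generator of trajectories\<close>

text \<open>In the application the columns \<open>c < M * Q\<close> enumerate experiment \<open>c div M\<close> at
  frequency \<open>w (c mod M)\<close>.\<close>

locale lti_samples =
  fixes A B C D :: "real mat" and nx nu ny P :: nat and \<omega> :: "nat \<Rightarrow> real"
    and U X Y :: "nat \<Rightarrow> complex vec"
  assumes A: "A \<in> carrier_mat nx nx" and B: "B \<in> carrier_mat nx nu"
    and C: "C \<in> carrier_mat ny nx" and D: "D \<in> carrier_mat ny nu"
    and U: "\<forall>c<P. U c \<in> carrier_vec nu" and X: "\<forall>c<P. X c \<in> carrier_vec nx"
    and state_eq: "\<forall>c<P. exp (\<i> * of_real (\<omega> c)) \<cdot>\<^sub>v X c = cmat A *\<^sub>v X c + cmat B *\<^sub>v U c"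
    and output_eq: "\<forall>c<P. Y c = cmat C *\<^sub>v X c + cmat D *\<^sub>v U c"
begin

abbreviation xsig where "xsig h \<equiv> sinusoid_sum nx P \<omega> X h"
abbreviation usig where "usig h \<equiv> sinusoid_sum nu P \<omega> U h"
abbreviation ysig where "ysig h \<equiv> sinusoid_sum ny P \<omega> Y h"

lemma sinusoid_sum_lti:
  assumes E: "E \<in> carrier_mat m nx" and F: "F \<in> carrier_mat m nu"
  shows "sinusoid_sum m P \<omega> (\<lambda>c. cmat E *\<^sub>v X c + cmat F *\<^sub>v U c) h k = E *\<^sub>v xsig h k + F *\<^sub>v usig h k"
  using E F X U
  by (simp add: sinusoid_sum_add sinusoid_sum_cmat_mult)

lemma xsig_Suc: "xsig h (Suc k) = A *\<^sub>v xsig h k + B *\<^sub>v usig h k"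
proof -
  have "xsig h (Suc k) = sinusoid_sum nx P \<omega> (\<lambda>c. exp (\<i> * of_real (\<omega> c)) \<cdot>\<^sub>v X c) h k"
    by (rule sinusoid_sum_Suc[OF X])
  also have "\<dots> = sinusoid_sum nx P \<omega> (\<lambda>c. cmat A *\<^sub>v X c + cmat B *\<^sub>v U c) h k"
    using state_eq by (intro sinusoid_sum_cong) simp
  finally show ?thesis by (simp add: sinusoid_sum_lti[OF A B])
qed

lemma ysig_eq: "ysig h k = C *\<^sub>v xsig h k + D *\<^sub>v usig h k"
proof -
  have "ysig h k = sinusoid_sum ny P \<omega> (\<lambda>c. cmat C *\<^sub>v X c + cmat D *\<^sub>v U c) h k"
    using output_eq by (intro sinusoid_sum_cong) simp
  thus ?thesis by (simp add: sinusoid_sum_lti[OF C D])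
qed

text \<open>\<open>(\<xi>, \<eta> 0, \<dots>, \<eta> (N - 1))\<close> is a real left kernel vector of the matrix whose
  column \<open>c\<close> stacks \<open>X c\<close> and \<open>e\<^sup>\<i>\<^sup>\<omega>\<^sup>k U c\<close> for \<open>k < N\<close>, with \<open>\<omega> = \<omega> c\<close>.\<close>

definition annihilates :: "nat \<Rightarrow> real vec \<Rightarrow> (nat \<Rightarrow> real vec) \<Rightarrow> bool" where
  "annihilates N \<xi> \<eta> \<longleftrightarrow> (\<forall>c<P. (\<Sum>r<nx. of_real (\<xi> $ r) * X c $ r) +
      (\<Sum>k<N. \<Sum>q<nu. of_real (\<eta> k $ q) * (exp (\<i> * of_real (\<omega> c) * of_nat k) * U c $ q)) = 0)"

text \<open>Multiplying by \<open>e\<^sup>\<i>\<^sup>\<omega>\<close> and using the state equation trades \<open>\<xi>\<close> for \<open>A\<^sup>T \<xi>\<close> at the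
  price of one more input coefficient, \<open>B\<^sup>T \<xi>\<close>.\<close>

lemma annihilates_Suc:
  assumes \<xi>: "\<xi> \<in> carrier_vec nx" and ann: "annihilates N \<xi> \<eta>"
  shows "annihilates (Suc N) (transpose_mat A *\<^sub>v \<xi>)
    (\<lambda>k. if k = 0 then transpose_mat B *\<^sub>v \<xi> else \<eta> (k - 1))"
  unfolding annihilates_def
proof (intro allI impI)
  fix c assume c: "c < P"
  let ?e = "exp (\<i> * of_real (\<omega> c))"
  let ?S1 = "\<Sum>r<nx. of_real (\<xi> $ r) * X c $ r"
  let ?S2 = "\<Sum>k<N. \<Sum>q<nu. of_real (\<eta> k $ q) * (exp (\<i> * of_real (\<omega> c) * of_nat k) * U c $ q)"
  have XU: "X c \<in> carrier_vec nx" "U c \<in> carrier_vec nu" using X U c by auto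
  have "(\<Sum>r<nx. of_real ((transpose_mat A *\<^sub>v \<xi>) $ r) * X c $ r)
      + (\<Sum>q<nu. of_real ((transpose_mat B *\<^sub>v \<xi>) $ q) * U c $ q)
      = (\<Sum>q<nx. of_real (\<xi> $ q) * (cmat A *\<^sub>v X c) $ q) + (\<Sum>q<nx. of_real (\<xi> $ q) * (cmat B *\<^sub>v U c) $ q)"
    by (simp only: transpose_mult_vec_sum[OF A \<xi> XU(1)] transpose_mult_vec_sum[OF B \<xi> XU(2)])
  also have "\<dots> = (\<Sum>q<nx. of_real (\<xi> $ q) * (?e \<cdot>\<^sub>v X c) $ q)"
    unfolding sum.distrib[symmetric] state_eq[rule_format, OF c]
    using A B by (intro sum.cong refl) (simp add: distrib_left)
  also have "\<dots> = ?e * ?S1"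
    using XU by (simp add: sum_distrib_left mult_ac)
  finally have state_part: "(\<Sum>r<nx. of_real ((transpose_mat A *\<^sub>v \<xi>) $ r) * X c $ r)
      + (\<Sum>q<nu. of_real ((transpose_mat B *\<^sub>v \<xi>) $ q) * U c $ q) = ?e * ?S1" .
  have input_part: "(\<Sum>k<N. \<Sum>q<nu. of_real (\<eta> k $ q) * (exp (\<i> * of_real (\<omega> c) * of_nat (Suc k)) * U c $ q))
      = ?e * ?S2"
    by (simp add: sum_distrib_left exp_add[symmetric] distrib_left mult_ac)
  have "(\<Sum>r<nx. of_real ((transpose_mat A *\<^sub>v \<xi>) $ r) * X c $ r) +
      (\<Sum>k<Suc N. \<Sum>q<nu. of_real ((if k = 0 then transpose_mat B *\<^sub>v \<xi> else \<eta> (k - 1)) $ q) *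
        (exp (\<i> * of_real (\<omega> c) * of_nat k) * U c $ q))
    = ((\<Sum>r<nx. of_real ((transpose_mat A *\<^sub>v \<xi>) $ r) * X c $ r)
      + (\<Sum>q<nu. of_real ((transpose_mat B *\<^sub>v \<xi>) $ q) * U c $ q))
      + (\<Sum>k<N. \<Sum>q<nu. of_real (\<eta> k $ q) * (exp (\<i> * of_real (\<omega> c) * of_nat (Suc k)) * U c $ q))"
    by (simp only: sum.lessThan_Suc_shift) (simp add: add.assoc)
  also have "\<dots> = ?e * (?S1 + ?S2)"
    unfolding state_part input_part by (simp add: distrib_left)
  also have "?S1 + ?S2 = 0" using ann c unfolding annihilates_def by blast
  finally show "(\<Sum>r<nx. of_real ((transpose_mat A *\<^sub>v \<xi>) $ r) * X c $ r) +
      (\<Sum>k<Suc N. \<Sum>q<nu. of_real ((if k = 0 then transpose_mat B *\<^sub>v \<xi> else \<eta> (k - 1)) $ q) *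
        (exp (\<i> * of_real (\<omega> c) * of_nat k) * U c $ q)) = 0" by simp
qed

abbreviation dual_iter :: "nat \<Rightarrow> real vec \<Rightarrow> real vec" where
  "dual_iter s \<xi> \<equiv> ((\<lambda>x. transpose_mat A *\<^sub>v x) ^^ s) \<xi>"

abbreviation input_coeffs :: "real vec \<Rightarrow> (nat \<Rightarrow> real vec) \<Rightarrow> nat \<Rightarrow> nat \<Rightarrow> real vec" where
  "input_coeffs \<xi> \<eta> \<equiv> shifted_seq (\<lambda>j. transpose_mat B *\<^sub>v dual_iter j \<xi>) \<eta>"

lemma dual_iter_carrier: "\<xi> \<in> carrier_vec nx \<Longrightarrow> dual_iter s \<xi> \<in> carrier_vec nx"
  using funpow_mult_mat_vec_carrier[of "transpose_mat A" nx] A by simp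

lemma annihilates_dual_iter:
  assumes \<xi>: "\<xi> \<in> carrier_vec nx" and ann: "annihilates L \<xi> \<eta>"
  shows "annihilates (L + s) (dual_iter s \<xi>) (input_coeffs \<xi> \<eta> s)"
proof (induction s)
  case 0
  then show ?case using ann by (simp add: shifted_seq_def)
next
  case (Suc s)
  with annihilates_Suc[OF dual_iter_carrier[OF \<xi>]] show ?case
    by (simp add: shifted_seq_Suc)
qed

lemma annihilates_pad:
  assumes ann: "annihilates N \<xi> \<eta>" and "N \<le> N'" and zero: "\<forall>k. N \<le> k \<longrightarrow> k < N' \<longrightarrow> \<eta> k = 0\<^sub>v nu"
  shows "annihilates N' \<xi> \<eta>"
  unfolding annihilates_def
proof (intro allI impI)
  fix c assume c: "c < P"
  let ?f = "\<lambda>k. \<Sum>q<nu. of_real (\<eta> k $ q) * (exp (\<i> * of_real (\<omega> c) * of_nat k) * U c $ q)"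
  have "sum ?f {..<N'} = sum ?f {..<N}"
    using \<open>N \<le> N'\<close> zero by (intro sum.mono_neutral_right) auto
  thus "(\<Sum>r<nx. of_real (\<xi> $ r) * X c $ r) + sum ?f {..<N'} = 0"
    using ann c unfolding annihilates_def by simp
qed

lemma annihilates_lincomb:
  assumes "finite S" and ann: "\<forall>s\<in>S. annihilates N (\<xi>s s) (\<eta>s s)"
  shows "annihilates N (vec nx (\<lambda>r. \<Sum>s\<in>S. \<alpha> s * \<xi>s s $ r)) (\<lambda>k. vec nu (\<lambda>q. \<Sum>s\<in>S. \<alpha> s * \<eta>s s k $ q))"
  unfolding annihilates_def
proof (intro allI impI)
  fix c assume c: "c < P"
  let ?z = "\<lambda>k q. exp (\<i> * of_real (\<omega> c) * of_nat k) * U c $ q"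
  have "(\<Sum>r<nx. of_real (\<xi>s s $ r) * X c $ r) + (\<Sum>k<N. \<Sum>q<nu. of_real (\<eta>s s k $ q) * ?z k q) = 0"
    if "s \<in> S" for s using ann that c unfolding annihilates_def by blast
  hence "(\<Sum>s\<in>S. of_real (\<alpha> s) * ((\<Sum>r<nx. of_real (\<xi>s s $ r) * X c $ r)
      + (\<Sum>k<N. \<Sum>q<nu. of_real (\<eta>s s k $ q) * ?z k q))) = 0"
    by simp
  moreover have "(\<Sum>r<nx. of_real (vec nx (\<lambda>r. \<Sum>s\<in>S. \<alpha> s * \<xi>s s $ r) $ r) * X c $ r)
      = (\<Sum>s\<in>S. of_real (\<alpha> s) * (\<Sum>r<nx. of_real (\<xi>s s $ r) * X c $ r))"
  proof -
    have "(\<Sum>r<nx. of_real (vec nx (\<lambda>r. \<Sum>s\<in>S. \<alpha> s * \<xi>s s $ r) $ r) * X c $ r)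
        = (\<Sum>r<nx. \<Sum>s\<in>S. of_real (\<alpha> s) * (of_real (\<xi>s s $ r) * X c $ r))"
      by (intro sum.cong refl) (simp add: sum_distrib_right mult.assoc)
    also have "\<dots> = (\<Sum>s\<in>S. \<Sum>r<nx. of_real (\<alpha> s) * (of_real (\<xi>s s $ r) * X c $ r))"
      by (rule sum.swap)
    finally show ?thesis by (simp add: sum_distrib_left)
  qed
  moreover have "(\<Sum>k<N. \<Sum>q<nu. of_real (vec nu (\<lambda>q. \<Sum>s\<in>S. \<alpha> s * \<eta>s s k $ q) $ q) * ?z k q)
      = (\<Sum>s\<in>S. of_real (\<alpha> s) * (\<Sum>k<N. \<Sum>q<nu. of_real (\<eta>s s k $ q) * ?z k q))"
  proof -
    have "(\<Sum>k<N. \<Sum>q<nu. of_real (vec nu (\<lambda>q. \<Sum>s\<in>S. \<alpha> s * \<eta>s s k $ q) $ q) * ?z k q)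
        = (\<Sum>k<N. \<Sum>q<nu. \<Sum>s\<in>S. of_real (\<alpha> s) * (of_real (\<eta>s s k $ q) * ?z k q))"
      by (intro sum.cong refl) (simp add: sum_distrib_right mult.assoc)
    also have "\<dots> = (\<Sum>k<N. \<Sum>s\<in>S. \<Sum>q<nu. of_real (\<alpha> s) * (of_real (\<eta>s s k $ q) * ?z k q))"
      by (intro sum.cong refl) (rule sum.swap)
    also have "\<dots> = (\<Sum>s\<in>S. \<Sum>k<N. \<Sum>q<nu. of_real (\<alpha> s) * (of_real (\<eta>s s k $ q) * ?z k q))"
      by (rule sum.swap)
    finally show ?thesis by (simp add: sum_distrib_left)
  qed
  ultimately show "(\<Sum>r<nx. of_real (vec nx (\<lambda>r. \<Sum>s\<in>S. \<alpha> s * \<xi>s s $ r) $ r) * X c $ r) +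
      (\<Sum>k<N. \<Sum>q<nu. of_real (vec nu (\<lambda>q. \<Sum>s\<in>S. \<alpha> s * \<eta>s s k $ q) $ q) * ?z k q) = 0"
    by (simp add: distrib_left sum.distrib)
qed

lemma input_coeffs_recurrence:
  assumes pe: "persistently_exciting nu (L + nx) P \<omega> U"
    and \<xi>: "\<xi> \<in> carrier_vec nx" and tail: "\<forall>k\<ge>L. \<eta> k = 0\<^sub>v nu" and ann: "annihilates L \<xi> \<eta>"
    and "d \<le> nx" and dep: "\<forall>r<nx. dual_iter d \<xi> $ r = (\<Sum>s<d. a s * dual_iter s \<xi> $ r)"
    and k: "k < L + nx" and q: "q < nu"
  shows "input_coeffs \<xi> \<eta> d k $ q = (\<Sum>s<d. a s * input_coeffs \<xi> \<eta> s k $ q)"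
proof -
  define \<alpha> where "\<alpha> s = (if s = d then 1 else - a s)" for s
  have split: "(\<Sum>s\<in>{..d}. f s) = f d + (\<Sum>s<d. f s)" for f :: "nat \<Rightarrow> real"
    by (simp add: lessThan_Suc_atMost[symmetric])
  have "annihilates (L + nx) (dual_iter s \<xi>) (input_coeffs \<xi> \<eta> s)" if "s \<le> d" for s
  proof (rule annihilates_pad)
    show "annihilates (L + s) (dual_iter s \<xi>) (input_coeffs \<xi> \<eta> s)"
      by (rule annihilates_dual_iter[OF \<xi> ann])
    show "L + s \<le> L + nx" using that \<open>d \<le> nx\<close> by simp
    show "\<forall>k. L + s \<le> k \<longrightarrow> k < L + nx \<longrightarrow> input_coeffs \<xi> \<eta> s k = 0\<^sub>v nu"
      using tail by (simp add: shifted_seq_def)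
  qed
  then have comb: "annihilates (L + nx) (vec nx (\<lambda>r. \<Sum>s\<in>{..d}. \<alpha> s * dual_iter s \<xi> $ r))
      (\<lambda>k. vec nu (\<lambda>q. \<Sum>s\<in>{..d}. \<alpha> s * input_coeffs \<xi> \<eta> s k $ q))"
    by (intro annihilates_lincomb) auto
  have "(\<Sum>s\<in>{..d}. \<alpha> s * dual_iter s \<xi> $ r) = 0" if "r < nx" for r
    using dep that by (simp add: split \<alpha>_def sum_negf)
  moreover define \<beta> where "\<beta> k = vec nu (\<lambda>q. \<Sum>s\<in>{..d}. \<alpha> s * input_coeffs \<xi> \<eta> s k $ q)" for k
  ultimately have "\<forall>c<P. (\<Sum>k<L + nx. \<Sum>q<nu. of_real (\<beta> k $ q) * (exp (\<i> * of_real (\<omega> c) * of_nat k) * U c $ q)) = 0"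
    using comb unfolding annihilates_def \<beta>_def by simp
  moreover have "(\<forall>c<P. (\<Sum>k<L + nx. \<Sum>q<nu. of_real (\<beta> k $ q) * (exp (\<i> * of_real (\<omega> c) * of_nat k) * U c $ q)) = 0)
      \<longrightarrow> (\<forall>k<L + nx. \<forall>q<nu. \<beta> k $ q = 0)"
    using pe unfolding persistently_exciting_def by (rule spec)
  ultimately have "\<beta> k $ q = 0" using k q by blast
  thus ?thesis using q by (simp add: \<beta>_def split \<alpha>_def sum_negf)
qed

lemma annihilates_imp_zero:
  assumes ctrb: "controllable A B" and pe: "persistently_exciting nu (L + nx) P \<omega> U"
    and \<xi>: "\<xi> \<in> carrier_vec nx" and \<eta>: "\<forall>k. \<eta> k \<in> carrier_vec nu"
    and tail: "\<forall>k\<ge>L. \<eta> k = 0\<^sub>v nu" and ann: "annihilates L \<xi> \<eta>"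
  shows "\<xi> = 0\<^sub>v nx" and "\<forall>k. \<eta> k = 0\<^sub>v nu"
proof -
  obtain d a where d: "d \<le> nx" and dep: "\<forall>r<nx. dual_iter d \<xi> $ r = (\<Sum>s<d. a s * dual_iter s \<xi> $ r)"
    using exists_dependent_on_predecessors[of nx "\<lambda>s. dual_iter s \<xi>"] by blast
  have zero: "(\<forall>k. \<eta> k $ q = 0) \<and> (\<forall>j<d. (transpose_mat B *\<^sub>v dual_iter j \<xi>) $ q = 0)" if q: "q < nu" for q
  proof -
    have "\<forall>k<L + d. shifted_seq (\<lambda>j. (transpose_mat B *\<^sub>v dual_iter j \<xi>) $ q) (\<lambda>k. \<eta> k $ q) d k
        = (\<Sum>s<d. a s * shifted_seq (\<lambda>j. (transpose_mat B *\<^sub>v dual_iter j \<xi>) $ q) (\<lambda>k. \<eta> k $ q) s k)"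
      using input_coeffs_recurrence[OF pe \<xi> tail ann d dep _ q] d by (simp add: shifted_seq_index)
    moreover have "\<forall>k\<ge>L. \<eta> k $ q = 0" using tail q by simp
    ultimately show ?thesis using shifted_seq_recurrence_imp_zero by blast
  qed
  show \<eta>0: "\<forall>k. \<eta> k = 0\<^sub>v nu"
    using zero \<eta> by (intro allI eq_vecI) auto
  have "transpose_mat B *\<^sub>v dual_iter j \<xi> = 0\<^sub>v nu" if "j < d" for j
    using zero that B by (intro eq_vecI) auto
  hence "transpose_mat B *\<^sub>v dual_iter j \<xi> = 0\<^sub>v nu" for j
    using iterates_annihilated_if_dependent[of "transpose_mat A" nx "transpose_mat B" nu \<xi> d a] A B \<xi> dep
    by simp
  thus "\<xi> = 0\<^sub>v nx" using controllable_left_kernel[OF A B ctrb \<xi>] by blast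
qed

definition state_input_mat :: "nat \<Rightarrow> real mat" where
  "state_input_mat N = re_im_mat P (nx + nu * N) (\<lambda>r c. if r < nx then X c $ r
     else exp (\<i> * of_real (\<omega> c) * of_nat ((r - nx) div nu)) * U c $ ((r - nx) mod nu))"

lemma annihilates_if_state_input_mat_left_kernel:
  assumes \<gamma>: "\<gamma> \<in> carrier_vec (nx + nu * N)" and ker: "transpose_mat (state_input_mat N) *\<^sub>v \<gamma> = 0\<^sub>v (2 * P)"
  shows "annihilates N (vec nx (\<lambda>r. \<gamma> $ r))
    (\<lambda>k. if k < N then vec nu (\<lambda>q. \<gamma> $ (nx + (k * nu + q))) else 0\<^sub>v nu)"
  unfolding annihilates_def
proof (intro allI impI)
  fix c assume c: "c < P"
  let ?\<eta> = "\<lambda>k. if k < N then vec nu (\<lambda>q. \<gamma> $ (nx + (k * nu + q))) else 0\<^sub>v nu"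
  let ?f = "\<lambda>r. of_real (\<gamma> $ r) * (if r < nx then X c $ r
    else exp (\<i> * of_real (\<omega> c) * of_nat ((r - nx) div nu)) * U c $ ((r - nx) mod nu))"
  have "(\<Sum>r<nx + nu * N. ?f r) = (\<Sum>r<nx. ?f r) + (\<Sum>r<nu * N. ?f (nx + r))"
    by (rule sum_lessThan_add)
  also have "(\<Sum>r<nu * N. ?f (nx + r)) = (\<Sum>k<N. \<Sum>q<nu. ?f (nx + (k * nu + q)))"
    by (rule sum_nat_blocks)
  also have "\<dots> = (\<Sum>k<N. \<Sum>q<nu. of_real (?\<eta> k $ q) * (exp (\<i> * of_real (\<omega> c) * of_nat k) * U c $ q))"
    by (intro sum.cong refl) (simp add: block_index)
  also have "(\<Sum>r<nx. ?f r) = (\<Sum>r<nx. of_real (vec nx (\<lambda>r. \<gamma> $ r) $ r) * X c $ r)"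
    by (intro sum.cong refl) simp
  finally show "(\<Sum>r<nx. of_real (vec nx (\<lambda>r. \<gamma> $ r) $ r) * X c $ r) +
      (\<Sum>k<N. \<Sum>q<nu. of_real (?\<eta> k $ q) * (exp (\<i> * of_real (\<omega> c) * of_nat k) * U c $ q)) = 0"
    using re_im_mat_left_kernel[OF \<gamma> ker[unfolded state_input_mat_def] c] by simp
qed

lemma state_input_mat_left_kernel:
  assumes ctrb: "controllable A B" and pe: "persistently_exciting nu (N + nx) P \<omega> U"
    and \<gamma>: "\<gamma> \<in> carrier_vec (nx + nu * N)" and ker: "transpose_mat (state_input_mat N) *\<^sub>v \<gamma> = 0\<^sub>v (2 * P)"
  shows "\<gamma> = 0\<^sub>v (nx + nu * N)"
proof -
  define \<xi> where "\<xi> = vec nx (\<lambda>r. \<gamma> $ r)"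
  define \<eta> where "\<eta> k = (if k < N then vec nu (\<lambda>q. \<gamma> $ (nx + (k * nu + q))) else 0\<^sub>v nu)" for k
  have "\<xi> \<in> carrier_vec nx" "\<forall>k. \<eta> k \<in> carrier_vec nu" "\<forall>k\<ge>N. \<eta> k = 0\<^sub>v nu"
    unfolding \<xi>_def \<eta>_def by auto
  note zero = annihilates_imp_zero[OF ctrb pe this
      annihilates_if_state_input_mat_left_kernel[OF \<gamma> ker, folded \<xi>_def \<eta>_def]]
  show ?thesis
  proof (rule eq_vecI)
    fix r assume "r < dim_vec (0\<^sub>v (nx + nu * N))"
    hence r: "r < nx + nu * N" by simp
    show "\<gamma> $ r = 0\<^sub>v (nx + nu * N) $ r"
    proof (cases "r < nx")
      case True
      have "\<xi> $ r = 0" using zero(1) True by simp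
      thus ?thesis using True by (simp add: \<xi>_def)
    next
      case False
      define k q where "k = (r - nx) div nu" and "q = (r - nx) mod nu"
      have "r - nx < nu * N" using r False by simp
      moreover from this have "0 < nu" by (cases nu) auto
      ultimately have kq: "k < N" "q < nu" "r = nx + (k * nu + q)"
        using False unfolding k_def q_def by (auto simp: less_mult_imp_div_less mult.commute)
      have "\<eta> k $ q = 0" using zero(2) kq by simp
      thus ?thesis using kq r by (simp add: \<eta>_def)
    qed
  qed (use \<gamma> in simp)
qed

lemma sinusoid_sum_interpolates:
  assumes ctrb: "controllable A B" and pe: "persistently_exciting nu (N + nx) P \<omega> U"
    and x0: "x0 \<in> carrier_vec nx" and u: "\<forall>k<N. u k \<in> carrier_vec nu"
  shows "\<exists>g\<in>carrier_vec (2 * P). xsig (complex_weights P g) 0 = x0 \<and>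
    (\<forall>k<N. usig (complex_weights P g) k = u k)"
proof -
  define b where "b = vec (nx + nu * N) (\<lambda>r. if r < nx then x0 $ r else u ((r - nx) div nu) $ ((r - nx) mod nu))"
  obtain g where g: "g \<in> carrier_vec (2 * P)" and gb: "state_input_mat N *\<^sub>v g = b"
    using real_mat_solvable_if_left_kernel_trivial[of "state_input_mat N" "nx + nu * N" "2 * P" b]
      state_input_mat_left_kernel[OF ctrb pe]
    unfolding b_def state_input_mat_def by auto
  let ?h = "complex_weights P g"
  have entry: "Re (\<Sum>c<P. ?h c * (if r < nx then X c $ r
      else exp (\<i> * of_real (\<omega> c) * of_nat ((r - nx) div nu)) * U c $ ((r - nx) mod nu))) = b $ r"
    if "r < nx + nu * N" for r
  proof -
    have "(state_input_mat N *\<^sub>v g) $ r = Re (\<Sum>c<P. ?h c * (if r < nx then X c $ r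
        else exp (\<i> * of_real (\<omega> c) * of_nat ((r - nx) div nu)) * U c $ ((r - nx) mod nu)))"
      unfolding state_input_mat_def by (rule re_im_mat_mult_vec[OF g that])
    thus ?thesis using gb by simp
  qed
  have "xsig ?h 0 = x0"
  proof (rule eq_vecI)
    fix r assume "r < dim_vec x0"
    hence r: "r < nx" using x0 by simp
    thus "xsig ?h 0 $ r = x0 $ r"
      using entry[of r] by (simp add: sinusoid_sum_def b_def)
  qed (use x0 in simp)
  moreover have "usig ?h k = u k" if k: "k < N" for k
  proof -
    have uk: "u k \<in> carrier_vec nu" using u k by blast
    show ?thesis
    proof (rule eq_vecI)
      fix q assume "q < dim_vec (u k)"
      hence q: "q < nu" using uk by simp
      have "nx + (k * nu + q) < nx + nu * N" using block_index[OF k q] by simp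
      thus "usig ?h k $ q = u k $ q"
        using entry[of "nx + (k * nu + q)"] q by (simp add: sinusoid_sum_def b_def block_index[OF k q] mult.assoc)
    qed (use uk in simp)
  qed
  ultimately show ?thesis using g by blast
qed

lemma trajectory_is_sinusoid_sum:
  assumes ctrb: "controllable A B" and pe: "persistently_exciting nu (L + nx) P \<omega> U"
    and traj: "io_trajectory A B C D L u y"
  shows "\<exists>g\<in>carrier_vec (2 * P). \<forall>k<L. usig (complex_weights P g) k = u k \<and> ysig (complex_weights P g) k = y k"
proof -
  obtain x where x: "\<forall>k<L. x k \<in> carrier_vec nx" and u: "\<forall>k<L. u k \<in> carrier_vec nu"
    and x_Suc: "\<forall>k. Suc k < L \<longrightarrow> x (Suc k) = A *\<^sub>v x k + B *\<^sub>v u k"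
    and y: "\<forall>k<L. y k = C *\<^sub>v x k + D *\<^sub>v u k"
    using traj A B C unfolding io_trajectory_def by auto
  have "(if 0 < L then x 0 else 0\<^sub>v nx) \<in> carrier_vec nx" using x by simp
  from sinusoid_sum_interpolates[OF ctrb pe this u]
  obtain g where g: "g \<in> carrier_vec (2 * P)" and g0: "xsig (complex_weights P g) 0 = (if 0 < L then x 0 else 0\<^sub>v nx)"
    and gu: "\<forall>k<L. usig (complex_weights P g) k = u k"
    by blast
  have gx: "xsig (complex_weights P g) k = x k" if "k < L" for k
    using that by (induction k) (simp_all add: g0 xsig_Suc gu x_Suc)
  show ?thesis using g gu gx y by (auto simp: ysig_eq)
qed

lemma sinusoid_output_determined:
  assumes traj: "io_trajectory A B C D L u y" and L: "nx \<le> L0" "L0 \<le> L"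
    and u: "\<forall>k<L. usig h k = u k" and y0: "\<forall>k<L0. ysig h k = y k"
    and k: "k < L"
  shows "ysig h k = y k"
proof -
  obtain x where x: "\<forall>k<L. x k \<in> carrier_vec nx" and uc: "\<forall>k<L. u k \<in> carrier_vec nu"
    and x_Suc: "\<forall>k. Suc k < L \<longrightarrow> x (Suc k) = A *\<^sub>v x k + B *\<^sub>v u k"
    and y: "\<forall>k<L. y k = C *\<^sub>v x k + D *\<^sub>v u k"
    using traj A B C unfolding io_trajectory_def by auto
  have "C *\<^sub>v xsig h k = C *\<^sub>v x k" if "k < nx" for k
  proof (rule add_vec_right_cancel[where n = ny])
    show "C *\<^sub>v xsig h k + D *\<^sub>v u k = C *\<^sub>v x k + D *\<^sub>v u k"
      using y0 y u ysig_eq that L by (metis less_le_trans)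
  qed (use C D x uc that L in auto)
  hence "C *\<^sub>v xsig h k = C *\<^sub>v x k"
    using outputs_agree_if_agree_initially[OF A B C _ x uc _ x_Suc, of "xsig h"] xsig_Suc u L k
    by (simp add: order.trans)
  thus ?thesis using ysig_eq u y k by simp
qed

end

lemma lti_samples_of_io_spectra:
  assumes A: "A \<in> carrier_mat nx nx" and B: "B \<in> carrier_mat nx nu"
    and C: "C \<in> carrier_mat ny nx" and D: "D \<in> carrier_mat ny nu"
    and M: "M \<ge> 1" and freq: "\<forall>m<M. w m \<in> {0..<pi}"
    and spec: "\<forall>i<Q. io_spectrum A B C D (Ud i) (Yd i)"
  obtains X where "lti_samples A B C D nx nu ny (M * Q) (\<lambda>c. w (c mod M))
    (\<lambda>c. Ud (c div M) (w (c mod M))) X (\<lambda>c. Yd (c div M) (w (c mod M)))"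
proof -
  have "\<forall>i<Q. \<exists>X. is_spectrum nu (Ud i) \<and> is_spectrum nx X \<and>
      (\<forall>v\<in>Wint. exp (\<i> * of_real v) \<cdot>\<^sub>v X v = cmat A *\<^sub>v X v + cmat B *\<^sub>v Ud i v \<and>
                Yd i v = cmat C *\<^sub>v X v + cmat D *\<^sub>v Ud i v)"
    using spec A B unfolding io_spectrum_def by auto
  then obtain Xs where Xs: "\<forall>i<Q. is_spectrum nu (Ud i) \<and> is_spectrum nx (Xs i) \<and>
      (\<forall>v\<in>Wint. exp (\<i> * of_real v) \<cdot>\<^sub>v Xs i v = cmat A *\<^sub>v Xs i v + cmat B *\<^sub>v Ud i v \<and>
                Yd i v = cmat C *\<^sub>v Xs i v + cmat D *\<^sub>v Ud i v)"
    by metis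
  have "c div M < Q \<and> w (c mod M) \<in> Wint" if "c < M * Q" for c
  proof
    show "c div M < Q" using that by (simp add: less_mult_imp_div_less mult.commute)
    have "c mod M < M" using M by simp
    thus "w (c mod M) \<in> Wint" using freq pi_gt_zero unfolding Wint_def by fastforce
  qed
  hence "lti_samples A B C D nx nu ny (M * Q) (\<lambda>c. w (c mod M))
    (\<lambda>c. Ud (c div M) (w (c mod M))) (\<lambda>c. Xs (c div M) (w (c mod M))) (\<lambda>c. Yd (c div M) (w (c mod M)))"
    using A B C D Xs unfolding lti_samples_def is_spectrum_def by blast
  thus thesis by (rule that)
qed

theorem proposition1:
  fixes A B C D :: "real mat" and nx nu ny Q M L0 L :: nat
    and w :: "nat \<Rightarrow> real"
    and Ud Yd :: "nat \<Rightarrow> real \<Rightarrow> complex vec"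
    and uini yini u y :: "nat \<Rightarrow> real vec"
  assumes A: "A \<in> carrier_mat nx nx" and B: "B \<in> carrier_mat nx nu"
    and C: "C \<in> carrier_mat ny nx" and D: "D \<in> carrier_mat ny nu"
    and ctrb: "controllable A B"
    and Q: "Q \<ge> 1" and M: "M \<ge> 1"
    and freq: "\<forall>m<M. w m \<in> {0..<pi}"
    and spec: "\<forall>i<Q. io_spectrum A B C D (Ud i) (Yd i)"
    and L: "nx \<le> L0" "L0 \<le> L"
    and cpe: "CPE nu (L + nx) M Q (\<lambda>i m. Ud i (w m)) w"
    and ini: "io_trajectory A B C D L0 uini yini"
    and traj: "io_trajectory A B C D L u y"
    and agree: "\<forall>k<L0. u k = uini k \<and> y k = yini k"
  shows "(\<exists>g \<in> carrier_vec (2 * M * Q).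
            stack nu uini 0 L0 @\<^sub>v stack nu u L0 L @\<^sub>v stack ny yini 0 L0 =
            (Gamma_mat nu L M Q (\<lambda>i m. Ud i (w m)) w @\<^sub>r Gamma_mat ny L0 M Q (\<lambda>i m. Yd i (w m)) w) *\<^sub>v g)
       \<and> (\<forall>g \<in> carrier_vec (2 * M * Q).
            stack nu uini 0 L0 @\<^sub>v stack nu u L0 L @\<^sub>v stack ny yini 0 L0 =
            (Gamma_mat nu L M Q (\<lambda>i m. Ud i (w m)) w @\<^sub>r Gamma_mat ny L0 M Q (\<lambda>i m. Yd i (w m)) w) *\<^sub>v g
            \<longrightarrow> stack ny y 0 L = Gamma_mat ny L M Q (\<lambda>i m. Yd i (w m)) w *\<^sub>v g)"
proof -
  obtain X where "lti_samples A B C D nx nu ny (M * Q) (\<lambda>c. w (c mod M))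
      (\<lambda>c. Ud (c div M) (w (c mod M))) X (\<lambda>c. Yd (c div M) (w (c mod M)))"
    using lti_samples_of_io_spectra[OF A B C D M freq spec] .
  then interpret S: lti_samples A B C D nx nu ny "M * Q" "\<lambda>c. w (c mod M)"
    "\<lambda>c. Ud (c div M) (w (c mod M))" X "\<lambda>c. Yd (c div M) (w (c mod M))" .
  have pe: "persistently_exciting nu (L + nx) (M * Q) (\<lambda>c. w (c mod M)) (\<lambda>c. Ud (c div M) (w (c mod M)))"
    using CPE_imp_persistently_exciting[OF M cpe] by simp
  have "\<forall>k<L. u k \<in> carrier_vec nu" "\<forall>k<L. y k \<in> carrier_vec ny"
    using traj B C unfolding io_trajectory_def by auto
  note equation_iff = Gamma_equation_iff[OF M _ L(2) agree this]
  show ?thesis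
  proof (intro conjI ballI impI)
    obtain g where "g \<in> carrier_vec (2 * (M * Q))"
      and "\<forall>k<L. S.usig (complex_weights (M * Q) g) k = u k \<and> S.ysig (complex_weights (M * Q) g) k = y k"
      using S.trajectory_is_sinusoid_sum[OF ctrb pe traj] by blast
    with L show "\<exists>g\<in>carrier_vec (2 * M * Q). stack nu uini 0 L0 @\<^sub>v stack nu u L0 L @\<^sub>v stack ny yini 0 L0 =
        (Gamma_mat nu L M Q (\<lambda>i m. Ud i (w m)) w @\<^sub>r Gamma_mat ny L0 M Q (\<lambda>i m. Yd i (w m)) w) *\<^sub>v g"
      by (auto simp: equation_iff mult.assoc)
  next
    fix g assume g: "g \<in> carrier_vec (2 * M * Q)" and "stack nu uini 0 L0 @\<^sub>v stack nu u L0 L @\<^sub>v stack ny yini 0 L0 =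
        (Gamma_mat nu L M Q (\<lambda>i m. Ud i (w m)) w @\<^sub>r Gamma_mat ny L0 M Q (\<lambda>i m. Yd i (w m)) w) *\<^sub>v g"
    hence "\<forall>k<L. S.ysig (complex_weights (M * Q) g) k = y k"
      using S.sinusoid_output_determined[OF traj L] by (simp add: equation_iff)
    thus "stack ny y 0 L = Gamma_mat ny L M Q (\<lambda>i m. Yd i (w m)) w *\<^sub>v g"
      unfolding Gamma_mat_mult_vec[OF M g] by (intro stack_cong) simp
  qed
qed

end
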